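(* Let $n\ge 3$, let $U\subseteq\mathbb{R}^n$ be an open cone, and let $f$ be a smooth function on $U$, homogeneous of degree $d>1$ ($f(\lambda x)=\lambda^d f(x)$ for $\lambda>0$), with $f>0$ and $\det(\partial^2 f/\partial x_i\partial x_j)\ne 0$ on $U$. Give $U$ the pseudo-Riemannian metric $-\frac{1}{d(d-1)}\partial^2 f/\partial x_i\partial x_j$ and $M=\{x\in U:f(x)=1\}$ the restricted metric. Let $x\in M$, let $P$ be a nondegenerate 2-plane in $T_xM$, and let $c>0$. Let $K_M(P)$ be the sectional curvature of $M$ at $P$, and let $K_U(cP)$ be the sectional curvature of $U$ at the point $cx$ on the 2-plane $cP$ (the image of $P$ under the differential of $y\mapsto cy$). Then $$K_U(cP)=\frac{1}{c^d}\Big(K_M(P)+\frac{d^2}{4}\Big).$$ *)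

theory Defs
  imports "HOL-Analysis.Analysis"
begin

text \<open>Coordinates: points of R^n are vectors real^'n; a pseudo-Riemannian metric on an
open subset is given by its Gram matrix field G :: real^'n => real^'n^'n.\<close>

definition dpartial :: "'n::finite \<Rightarrow> (real^'n \<Rightarrow> real) \<Rightarrow> real^'n \<Rightarrow> real" where
  "dpartial i f x = deriv (\<lambda>t. f (x + t *\<^sub>R axis i 1)) 0"

fun iter_partial :: "'n::finite list \<Rightarrow> (real^'n \<Rightarrow> real) \<Rightarrow> real^'n \<Rightarrow> real" where
  "iter_partial [] f = f"
| "iter_partial (i # is) f = dpartial i (iter_partial is f)"

definition smooth_on :: "(real^'n::finite) set \<Rightarrow> (real^'n \<Rightarrow> real) \<Rightarrow> bool" where
  "smooth_on U f \<longleftrightarrow> (\<forall>is. iter_partial is f differentiable_on U)"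

definition open_cone :: "(real^'n::finite) set \<Rightarrow> bool" where
  "open_cone U \<longleftrightarrow> open U \<and> (\<forall>x\<in>U. \<forall>t::real. t > 0 \<longrightarrow> t *\<^sub>R x \<in> U)"

definition hessian :: "(real^'n::finite \<Rightarrow> real) \<Rightarrow> real^'n \<Rightarrow> real^'n^'n" where
  "hessian f x = (\<chi> i j. dpartial i (dpartial j f) x)"

definition hess_metric :: "real \<Rightarrow> (real^'n::finite \<Rightarrow> real) \<Rightarrow> real^'n \<Rightarrow> real^'n^'n" where
  "hess_metric d f x = (\<chi> i j. - (1 / (d * (d - 1))) * hessian f x $ i $ j)"

definition gform :: "(real^'n::finite \<Rightarrow> real^'n^'n) \<Rightarrow> real^'n \<Rightarrow> real^'n \<Rightarrow> real^'n \<Rightarrow> real" where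
  "gform G x u v = (\<Sum>i\<in>UNIV. \<Sum>j\<in>UNIV. u $ i * G x $ i $ j * v $ j)"

text \<open>Christoffel symbols Gamma^l_{jk} of the Levi-Civita connection:
  nabla_{d_j} d_k = sum_l Gamma^l_{jk} d_l.\<close>
definition christoffel :: "(real^'n::finite \<Rightarrow> real^'n^'n) \<Rightarrow> real^'n \<Rightarrow> 'n \<Rightarrow> 'n \<Rightarrow> 'n \<Rightarrow> real" where
  "christoffel G x l j k =
     (\<Sum>m\<in>UNIV. matrix_inv (G x) $ l $ m *
        (dpartial j (\<lambda>y. G y $ m $ k) x + dpartial k (\<lambda>y. G y $ m $ j) x
         - dpartial m (\<lambda>y. G y $ j $ k) x)) / 2"

text \<open>riemann G x l i j k = l-th component of R(d_i,d_j)d_k, where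
  R(X,Y)Z = nabla_X nabla_Y Z - nabla_Y nabla_X Z - nabla_[X,Y] Z.\<close>
definition riemann :: "(real^'n::finite \<Rightarrow> real^'n^'n) \<Rightarrow> real^'n \<Rightarrow> 'n \<Rightarrow> 'n \<Rightarrow> 'n \<Rightarrow> 'n \<Rightarrow> real" where
  "riemann G x l i j k =
     dpartial i (\<lambda>y. christoffel G y l j k) x - dpartial j (\<lambda>y. christoffel G y l i k) x
     + (\<Sum>m\<in>UNIV. christoffel G x m j k * christoffel G x l i m
                  - christoffel G x m i k * christoffel G x l j m)"

definition curv_vec :: "(real^'n::finite \<Rightarrow> real^'n^'n) \<Rightarrow> real^'n \<Rightarrow> real^'n \<Rightarrow> real^'n \<Rightarrow> real^'n \<Rightarrow> real^'n" where
  "curv_vec G x X Y Z = (\<chi> l. \<Sum>i\<in>UNIV. \<Sum>j\<in>UNIV. \<Sum>k\<in>UNIV. riemann G x l i j k * X $ i * Y $ j * Z $ k)"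

definition nondeg_plane :: "(real^'n::finite \<Rightarrow> real^'n^'n) \<Rightarrow> real^'n \<Rightarrow> real^'n \<Rightarrow> real^'n \<Rightarrow> bool" where
  "nondeg_plane G x X Y \<longleftrightarrow> gform G x X X * gform G x Y Y - (gform G x X Y)\<^sup>2 \<noteq> 0"

definition sectional_curvature :: "(real^'n::finite \<Rightarrow> real^'n^'n) \<Rightarrow> real^'n \<Rightarrow> real^'n \<Rightarrow> real^'n \<Rightarrow> real" where
  "sectional_curvature G x X Y =
     gform G x (curv_vec G x X Y Y) X / (gform G x X X * gform G x Y Y - (gform G x X Y)\<^sup>2)"

definition pullback_metric :: "(real^'n::finite \<Rightarrow> real^'n^'n) \<Rightarrow> (real^'m::finite \<Rightarrow> real^'n) \<Rightarrow> real^'m \<Rightarrow> real^'m^'m" where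
  "pullback_metric G \<phi> v = (\<chi> a b. gform G (\<phi> v) (frechet_derivative \<phi> (at v) (axis a 1))
                                              (frechet_derivative \<phi> (at v) (axis b 1)))"

definition level_set :: "(real^'n::finite) set \<Rightarrow> (real^'n \<Rightarrow> real) \<Rightarrow> (real^'n) set" where
  "level_set U f = {x \<in> U. f x = 1}"

definition local_param :: "(real^'n::finite) set \<Rightarrow> (real^'m::finite) set \<Rightarrow> (real^'m \<Rightarrow> real^'n) \<Rightarrow> bool" where
  "local_param M V \<phi> \<longleftrightarrow> open V \<and> (\<forall>i. smooth_on V (\<lambda>v. \<phi> v $ i)) \<and> \<phi> ` V \<subseteq> M
     \<and> inj_on \<phi> V \<and> openin (top_of_set M) (\<phi> ` V)
     \<and> continuous_on (\<phi> ` V) (inv_into V \<phi>)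
     \<and> (\<forall>v\<in>V. inj (frechet_derivative \<phi> (at v)))"

end

theory Submission
  imports Defs
begin

text \<open>
  Write \<open>g = -Hess f / (d(d-1))\<close>. Euler's identity for the homogeneous \<open>f\<close> gives
  \<open>g(x, -) = -(1/d) df\<^sub>x\<close>, so on \<open>M = {f = 1}\<close> the position vector \<open>x\<close> is \<open>g\<close>-orthogonal to
  \<open>T\<^sub>xM\<close> and \<open>g(x, x) = -f(x) = -1\<close>: it is a unit normal of negative length. Differentiating
  \<open>df(D\<phi>) = 0\<close> once more shows that the second fundamental form with respect to this normal
  is \<open>-(d/2)\<close> times the induced metric, and Gauss' equation, in which the length \<open>-1\<close> of the
  normal enters as a sign, yields \<open>K\<^sub>M = K\<^sub>U - d\<^sup>2/4\<close>. Finally \<open>g\<close> is homogeneous of degree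
  \<open>d - 2\<close>, so the dilation \<open>y \<mapsto> c y\<close> multiplies sectional curvatures by \<open>c\<^sup>-\<^sup>d\<close>.

  Everything is computed in coordinates, through Christoffel symbols of the first kind.
\<close>

section \<open>Partial derivatives\<close>

lemma dpartial_eq_derivative:
  fixes F :: "real^'n::finite \<Rightarrow> real"
  assumes "(F has_derivative F') (at x)"
  shows "dpartial i F x = F' (axis i 1)"
proof -
  have l: "linear F'" using assms has_derivative_linear by blast
  have "((\<lambda>t. x + t *\<^sub>R axis i 1) has_derivative (\<lambda>t. t *\<^sub>R axis i 1)) (at (0::real))"
    by (auto intro!: derivative_eq_intros)
  from has_derivative_compose[OF this, of F F'] assms
  have "((\<lambda>t. F (x + t *\<^sub>R axis i 1)) has_derivative (\<lambda>t. F' (t *\<^sub>R axis i 1))) (at 0)" by simp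
  then have "((\<lambda>t. F (x + t *\<^sub>R axis i 1)) has_field_derivative F' (axis i 1)) (at 0)"
    by (rule has_derivative_imp_has_field_derivative) (simp add: linear_scale[OF l])
  then show ?thesis unfolding dpartial_def by (rule DERIV_imp_deriv)
qed

lemma sum_dpartial_eq_derivative:
  fixes F :: "real^'n::finite \<Rightarrow> real"
  assumes "(F has_derivative F') (at x)"
  shows "(\<Sum>i\<in>UNIV. h$i * dpartial i F x) = F' h"
proof -
  have l: "linear F'" using assms has_derivative_linear by blast
  have "F' h = F' (\<Sum>i\<in>UNIV. h$i *\<^sub>R axis i 1)"
    using basis_expansion[of h] by (simp add: scalar_mult_eq_scaleR)
  also have "\<dots> = (\<Sum>i\<in>UNIV. h$i * F' (axis i 1))"
    by (simp add: linear_sum[OF l] linear_scale[OF l])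
  finally show ?thesis using dpartial_eq_derivative[OF assms] by simp
qed

lemma has_derivative_dpartial:
  fixes F :: "real^'n::finite \<Rightarrow> real"
  assumes "F differentiable (at x)"
  shows "(F has_derivative (\<lambda>h. \<Sum>i\<in>UNIV. h$i * dpartial i F x)) (at x)"
proof -
  obtain F' where F': "(F has_derivative F') (at x)" using assms differentiable_def by blast
  then show ?thesis by (rule has_derivative_eq_rhs) (simp add: fun_eq_iff sum_dpartial_eq_derivative[OF F'])
qed

lemma has_derivative_vec_componentwise:
  fixes F :: "real^'m::finite \<Rightarrow> real^'n::finite"
  assumes "\<And>i. ((\<lambda>z. F z $ i) has_derivative (\<lambda>h. F' h $ i)) (at v)"
  shows "(F has_derivative F') (at v)"
proof -
  have "((\<lambda>x. F x \<bullet> b) has_derivative (\<lambda>x. F' x \<bullet> b)) (at v)" if b: "b \<in> Basis" for b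
  proof -
    obtain r where "b = axis r 1" using b unfolding Basis_vec_def Basis_real_def by blast
    with assms[of r] show ?thesis by (simp add: inner_axis)
  qed
  then show ?thesis by (subst has_derivative_componentwise_within) blast
qed

lemma has_derivative_vec_nth:
  "(F has_derivative F') net \<Longrightarrow> ((\<lambda>z. F z $ i) has_derivative (\<lambda>h. F' h $ i)) net"
  by (rule bounded_linear.has_derivative[OF bounded_linear_vec_nth])

lemma has_derivative_vec_dpartial:
  fixes \<phi> :: "real^'m::finite \<Rightarrow> real^'n::finite"
  assumes "\<And>r. (\<lambda>z. \<phi> z $ r) differentiable (at y)"
  shows "(\<phi> has_derivative (\<lambda>h. \<chi> r. \<Sum>k\<in>UNIV. h$k * dpartial k (\<lambda>z. \<phi> z $ r) y)) (at y)"
  by (rule has_derivative_vec_componentwise) (simp add: has_derivative_dpartial assms)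

lemma dpartial_cong_open:
  fixes F H :: "real^'n::finite \<Rightarrow> real"
  assumes "open S" "x \<in> S" "\<And>y. y \<in> S \<Longrightarrow> F y = H y"
  shows "dpartial i F x = dpartial i H x"
proof -
  have "((\<lambda>t::real. x + t *\<^sub>R axis i 1) \<longlongrightarrow> x) (at 0)"
    by (auto intro!: tendsto_eq_intros)
  then have "eventually (\<lambda>t. x + t *\<^sub>R axis i 1 \<in> S) (at (0::real))"
    using assms(1,2) by (simp add: tendsto_def)
  then have "eventually (\<lambda>t. x + t *\<^sub>R axis i 1 \<in> S) (nhds (0::real))"
    using assms(2) by (simp add: eventually_nhds_conv_at)
  then have "eventually (\<lambda>t. F (x + t *\<^sub>R axis i 1) = H (x + t *\<^sub>R axis i 1)) (nhds (0::real))"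
    by eventually_elim (use assms(3) in auto)
  then show ?thesis unfolding dpartial_def by (rule deriv_cong_ev) simp
qed

lemma differentiable_cong_open:
  assumes "F differentiable (at x)" "open S" "x \<in> S" "\<And>y. y \<in> S \<Longrightarrow> F y = H y"
  shows "H differentiable (at x)"
  using assms has_derivative_transform_within_open unfolding differentiable_def by metis

lemma smooth_on_differentiable:
  assumes "smooth_on U f" "open U" "x \<in> U"
  shows "iter_partial is f differentiable (at x)"
  using assms unfolding smooth_on_def by (meson differentiable_on_eq_differentiable_at)

lemma sum_axis_mult: "(\<Sum>k\<in>UNIV. axis i (1::real) $ k * F k) = F i"
proof -
  have "axis i (1::real) $ k * F k = (if k = i then F k else 0)" for k by (simp add: axis_def)
  then show ?thesis by simp
qed

lemma dpartial_const: "dpartial i (\<lambda>y. c) x = 0"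
  by (rule dpartial_eq_derivative[where F'="\<lambda>_. 0"]) simp

lemma dpartial_sum:
  fixes F :: "'a \<Rightarrow> real^'n::finite \<Rightarrow> real"
  assumes "finite I" "\<And>a. a \<in> I \<Longrightarrow> F a differentiable (at x)"
  shows "dpartial i (\<lambda>y. \<Sum>a\<in>I. F a y) x = (\<Sum>a\<in>I. dpartial i (F a) x)"
proof -
  have "((\<lambda>y. \<Sum>a\<in>I. F a y) has_derivative (\<lambda>v. \<Sum>a\<in>I. \<Sum>k\<in>UNIV. v$k * dpartial k (F a) x)) (at x)"
    by (intro has_derivative_sum has_derivative_dpartial assms)
  from dpartial_eq_derivative[OF this] show ?thesis by (simp add: sum_axis_mult)
qed

lemma dpartial_mult:
  fixes F H :: "real^'n::finite \<Rightarrow> real"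
  assumes "F differentiable (at x)" "H differentiable (at x)"
  shows "dpartial i (\<lambda>y. F y * H y) x = dpartial i F x * H x + F x * dpartial i H x"
proof -
  have "((\<lambda>y. F y * H y) has_derivative
      (\<lambda>v. F x * (\<Sum>k\<in>UNIV. v$k * dpartial k H x) + (\<Sum>k\<in>UNIV. v$k * dpartial k F x) * H x)) (at x)"
    by (intro has_derivative_mult has_derivative_dpartial assms)
  from dpartial_eq_derivative[OF this] show ?thesis by (simp add: sum_axis_mult)
qed

lemma dpartial_cmult:
  fixes F :: "real^'n::finite \<Rightarrow> real"
  assumes "F differentiable (at x)"
  shows "dpartial i (\<lambda>y. c * F y) x = c * dpartial i F x"
proof -
  have "((\<lambda>y. c * F y) has_derivative (\<lambda>v. c * (\<Sum>k\<in>UNIV. v$k * dpartial k F x))) (at x)"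
    by (intro has_derivative_mult_right has_derivative_dpartial assms)
  from dpartial_eq_derivative[OF this] show ?thesis by (simp add: sum_axis_mult)
qed

lemma dpartial_comp:
  fixes H :: "real^'n::finite \<Rightarrow> real" and \<phi> :: "real^'m::finite \<Rightarrow> real^'n"
  assumes "H differentiable (at (\<phi> y))" "\<And>r. (\<lambda>z. \<phi> z $ r) differentiable (at y)"
  shows "dpartial c (\<lambda>z. H (\<phi> z)) y = (\<Sum>r\<in>UNIV. dpartial r H (\<phi> y) * dpartial c (\<lambda>z. \<phi> z $ r) y)"
proof -
  from has_derivative_compose[OF has_derivative_vec_dpartial[OF assms(2)] has_derivative_dpartial[OF assms(1)]]
  have "((\<lambda>z. H (\<phi> z)) has_derivative
      (\<lambda>v. \<Sum>i\<in>UNIV. (\<Sum>k\<in>UNIV. v$k * dpartial k (\<lambda>z. \<phi> z $ i) y) * dpartial i H (\<phi> y))) (at y)"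
    by simp
  from dpartial_eq_derivative[OF this] show ?thesis by (simp add: sum_axis_mult mult.commute)
qed

lemma dpartial_scaleR_arg:
  fixes h :: "real^'n::finite \<Rightarrow> real"
  assumes "h differentiable (at (a *\<^sub>R x))"
  shows "dpartial i (\<lambda>z. h (a *\<^sub>R z)) x = a * dpartial i h (a *\<^sub>R x)"
proof -
  have "((\<lambda>z. a *\<^sub>R z) has_derivative (\<lambda>z. a *\<^sub>R z)) (at x)" by (auto intro!: derivative_eq_intros)
  from has_derivative_compose[OF this has_derivative_dpartial[OF assms]]
  have "((\<lambda>z. h (a *\<^sub>R z)) has_derivative (\<lambda>v. \<Sum>k\<in>UNIV. (a *\<^sub>R v)$k * dpartial k h (a *\<^sub>R x))) (at x)"
    by simp
  from dpartial_eq_derivative[OF this] show ?thesis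
    by (simp add: sum_axis_mult mult.assoc flip: sum_distrib_left)
qed

lemma has_real_derivative_along_axis:
  fixes h :: "real^'n::finite \<Rightarrow> real"
  assumes "h differentiable (at (y + t *\<^sub>R axis i 1))"
  shows "((\<lambda>t. h (y + t *\<^sub>R axis i 1)) has_real_derivative dpartial i h (y + t *\<^sub>R axis i 1)) (at t)"
proof -
  have "((\<lambda>t. y + t *\<^sub>R axis i 1) has_derivative (\<lambda>t. t *\<^sub>R axis i 1)) (at t)"
    by (auto intro!: derivative_eq_intros)
  from has_derivative_compose[OF this has_derivative_dpartial[OF assms]]
  show ?thesis
    by (rule has_derivative_imp_has_field_derivative)
       (simp add: sum_axis_mult mult.assoc flip: sum_distrib_left)
qed

lemma second_difference_mean_value:
  fixes h :: "real^'n::finite \<Rightarrow> real" and i j :: 'n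
  defines "u \<equiv> axis i 1" and "v \<equiv> axis j 1"
  assumes hd: "\<And>y. y \<in> cball x (2 * s) \<Longrightarrow> h differentiable (at y)" and s: "0 < s"
  obtains \<xi> where "0 < \<xi>" "\<xi> < s"
    "h (x + s *\<^sub>R u + s *\<^sub>R v) - h (x + s *\<^sub>R u) - h (x + s *\<^sub>R v) + h x
       = s * (dpartial i h (x + s *\<^sub>R v + \<xi> *\<^sub>R u) - dpartial i h (x + \<xi> *\<^sub>R u))"
proof -
  define g where "g = (\<lambda>t. h ((x + s *\<^sub>R v) + t *\<^sub>R u) - h (x + t *\<^sub>R u))"
  have in_cball: "x + a *\<^sub>R u + b *\<^sub>R v \<in> cball x (2 * s)" if "\<bar>a\<bar> \<le> s" "\<bar>b\<bar> \<le> s" for a b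
  proof -
    have "norm (a *\<^sub>R u + b *\<^sub>R v) \<le> \<bar>a\<bar> + \<bar>b\<bar>"
      using norm_triangle_ineq[of "a *\<^sub>R u" "b *\<^sub>R v"] by (simp add: u_def v_def)
    moreover have "dist x (x + w) = norm w" for w :: "real^'n" by (simp add: dist_norm)
    ultimately show ?thesis using that by (simp add: add.assoc)
  qed
  have "(g has_real_derivative (dpartial i h ((x + s *\<^sub>R v) + t *\<^sub>R u) - dpartial i h (x + t *\<^sub>R u))) (at t)"
    if "0 \<le> t" "t \<le> s" for t
  proof -
    have "(x + s *\<^sub>R v) + t *\<^sub>R u \<in> cball x (2 * s)" "x + t *\<^sub>R u \<in> cball x (2 * s)"
      using in_cball[of t s] in_cball[of t 0] that s by (simp_all add: algebra_simps)
    then show ?thesis unfolding g_def u_def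
      by (intro derivative_intros has_real_derivative_along_axis) (auto simp: hd u_def)
  qed
  then obtain \<xi> where "0 < \<xi>" "\<xi> < s"
    "g s - g 0 = (s - 0) * (dpartial i h ((x + s *\<^sub>R v) + \<xi> *\<^sub>R u) - dpartial i h (x + \<xi> *\<^sub>R u))"
    using MVT2[OF s, of g "\<lambda>t. dpartial i h ((x + s *\<^sub>R v) + t *\<^sub>R u) - dpartial i h (x + t *\<^sub>R u)"]
    by auto
  moreover have "g s - g 0 = h (x + s *\<^sub>R u + s *\<^sub>R v) - h (x + s *\<^sub>R u) - h (x + s *\<^sub>R v) + h x"
    unfolding g_def by (simp add: algebra_simps)
  ultimately show ?thesis using that by simp
qed

lemma second_difference_approx:
  fixes h :: "real^'n::finite \<Rightarrow> real"
  assumes S: "open S" "x \<in> S" and hd: "\<And>y. y \<in> S \<Longrightarrow> h differentiable (at y)"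
    and Pd: "(\<lambda>y. dpartial i h y) differentiable (at x)" and e: "e > 0"
  shows "\<exists>\<delta>>0. \<forall>s. 0 < s \<and> s < \<delta> \<longrightarrow>
     \<bar>(h (x + s *\<^sub>R axis i 1 + s *\<^sub>R axis j 1) - h (x + s *\<^sub>R axis i 1) - h (x + s *\<^sub>R axis j 1) + h x)
        - s\<^sup>2 * dpartial j (\<lambda>y. dpartial i h y) x\<bar> \<le> 4 * e * s\<^sup>2"
proof -
  define P where "P = (\<lambda>y. dpartial i h y)"
  define u where "u = (axis i 1 :: real^'n)"
  define v where "v = (axis j 1 :: real^'n)"
  define P' where "P' = (\<lambda>w. \<Sum>k\<in>UNIV. w$k * dpartial k P x)"
  have PD: "(P has_derivative P') (at x)"
    unfolding P'_def P_def using has_derivative_dpartial[OF Pd] .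
  have lin: "linear P'" using PD has_derivative_linear by blast
  obtain d where d: "d > 0" "\<And>y. norm (y - x) < d \<Longrightarrow> norm (P y - P x - P' (y - x)) \<le> e * norm (y - x)"
    using PD e unfolding has_derivative_at_alt by blast
  obtain r where r: "r > 0" "ball x r \<subseteq> S" using S openE by blast
  define \<delta> where "\<delta> = min d r / 3"
  have main: "\<bar>(h (x + s *\<^sub>R u + s *\<^sub>R v) - h (x + s *\<^sub>R u) - h (x + s *\<^sub>R v) + h x) - s\<^sup>2 * P' v\<bar>
      \<le> 4 * e * s\<^sup>2" if s: "0 < s" "s < \<delta>" for s
  proof -
    have "2 * s < r" using s by (simp add: \<delta>_def)
    then have "cball x (2 * s) \<subseteq> S" using r(2) by (force simp: subset_eq)
    then obtain \<xi> where \<xi>: "0 < \<xi>" "\<xi> < s"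
      and mv: "h (x + s *\<^sub>R u + s *\<^sub>R v) - h (x + s *\<^sub>R u) - h (x + s *\<^sub>R v) + h x
         = s * (P (x + s *\<^sub>R v + \<xi> *\<^sub>R u) - P (x + \<xi> *\<^sub>R u))"
      using second_difference_mean_value[of x s h i j] hd s unfolding P_def u_def v_def by blast
    have lin_approx: "\<bar>P (x + w) - P x - P' w\<bar> \<le> e * (2 * s)" if "norm w \<le> 2 * s" for w
    proof -
      have "2 * s < d" using s by (simp add: \<delta>_def)
      then have "\<bar>P (x + w) - P x - P' w\<bar> \<le> e * norm w" using d(2)[of "x + w"] that by simp
      also have "\<dots> \<le> e * (2 * s)" using that e by (simp add: mult_left_mono)
      finally show ?thesis .
    qed
    have "norm (s *\<^sub>R v + \<xi> *\<^sub>R u) \<le> 2 * s"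
      using norm_triangle_ineq[of "s *\<^sub>R v" "\<xi> *\<^sub>R u"] s \<xi> by (simp add: u_def v_def)
    from lin_approx[OF this]
    have A: "\<bar>P (x + s *\<^sub>R v + \<xi> *\<^sub>R u) - P x - P' (s *\<^sub>R v + \<xi> *\<^sub>R u)\<bar> \<le> e * (2 * s)"
      by (simp add: add.assoc)
    have "norm (\<xi> *\<^sub>R u) \<le> 2 * s" using \<xi> by (simp add: u_def)
    from lin_approx[OF this] have B: "\<bar>P (x + \<xi> *\<^sub>R u) - P x - P' (\<xi> *\<^sub>R u)\<bar> \<le> e * (2 * s)" .
    have "P' (s *\<^sub>R v + \<xi> *\<^sub>R u) = s * P' v + P' (\<xi> *\<^sub>R u)"
      using lin by (simp add: linear_add linear_scale)
    with A B have "\<bar>(P (x + s *\<^sub>R v + \<xi> *\<^sub>R u) - P (x + \<xi> *\<^sub>R u)) - s * P' v\<bar> \<le> 4 * e * s"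
      by linarith
    then have "s * \<bar>(P (x + s *\<^sub>R v + \<xi> *\<^sub>R u) - P (x + \<xi> *\<^sub>R u)) - s * P' v\<bar> \<le> s * (4 * e * s)"
      using s by (intro mult_left_mono) auto
    moreover have "s * \<bar>(P (x + s *\<^sub>R v + \<xi> *\<^sub>R u) - P (x + \<xi> *\<^sub>R u)) - s * P' v\<bar>
        = \<bar>(h (x + s *\<^sub>R u + s *\<^sub>R v) - h (x + s *\<^sub>R u) - h (x + s *\<^sub>R v) + h x) - s\<^sup>2 * P' v\<bar>"
      unfolding mv using s by (simp add: abs_mult power2_eq_square mult.assoc flip: right_diff_distrib)
    ultimately show ?thesis by (simp add: power2_eq_square mult_ac)
  qed
  have "P' v = dpartial j P x" unfolding P'_def v_def by (simp add: sum_axis_mult)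
  moreover have "\<delta> > 0" using d r by (simp add: \<delta>_def)
  ultimately show ?thesis using main unfolding P_def u_def v_def by (intro exI[of _ \<delta>]) simp
qed

text \<open>Both mixed partials are the limit of the same second difference quotient.\<close>

lemma dpartial_commute:
  fixes h :: "real^'n::finite \<Rightarrow> real"
  assumes S: "open S" "x \<in> S" and hd: "\<And>y. y \<in> S \<Longrightarrow> h differentiable (at y)"
    and "(\<lambda>y. dpartial i h y) differentiable (at x)" "(\<lambda>y. dpartial j h y) differentiable (at x)"
  shows "dpartial j (\<lambda>y. dpartial i h y) x = dpartial i (\<lambda>y. dpartial j h y) x"
proof (rule ccontr)
  define A where "A = dpartial j (\<lambda>y. dpartial i h y) x"
  define B where "B = dpartial i (\<lambda>y. dpartial j h y) x"
  assume "dpartial j (\<lambda>y. dpartial i h y) x \<noteq> dpartial i (\<lambda>y. dpartial j h y) x"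
  then have ne: "A \<noteq> B" unfolding A_def B_def .
  define e where "e = \<bar>A - B\<bar> / 16"
  have e: "e > 0" using ne by (simp add: e_def)
  define D where "D = (\<lambda>s. h (x + s *\<^sub>R axis i 1 + s *\<^sub>R axis j 1) - h (x + s *\<^sub>R axis i 1)
                         - h (x + s *\<^sub>R axis j 1) + h x)"
  obtain d1 where d1: "d1 > 0" "\<And>s. 0 < s \<and> s < d1 \<Longrightarrow> \<bar>D s - s\<^sup>2 * A\<bar> \<le> 4 * e * s\<^sup>2"
    using second_difference_approx[OF S hd assms(4) e, of j] unfolding A_def D_def by blast
  obtain d2 where d2: "d2 > 0" "\<And>s. 0 < s \<and> s < d2 \<Longrightarrow> \<bar>D s - s\<^sup>2 * B\<bar> \<le> 4 * e * s\<^sup>2"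
  proof -
    have "h (x + s *\<^sub>R axis j 1 + s *\<^sub>R axis i 1) - h (x + s *\<^sub>R axis j 1) - h (x + s *\<^sub>R axis i 1) + h x
        = D s" for s
      unfolding D_def by (simp add: algebra_simps)
    then show ?thesis using second_difference_approx[OF S hd assms(5) e, of i] that unfolding B_def by auto
  qed
  define s where "s = min d1 d2 / 2"
  have s: "0 < s" "s < d1" "s < d2" using d1 d2 by (auto simp: s_def min_def)
  have "\<bar>s\<^sup>2 * A - s\<^sup>2 * B\<bar> \<le> 8 * e * s\<^sup>2" using d1(2)[of s] d2(2)[of s] s by linarith
  then have "s\<^sup>2 * \<bar>A - B\<bar> \<le> s\<^sup>2 * (\<bar>A - B\<bar> / 2)"
    unfolding e_def by (simp add: abs_mult right_diff_distrib[symmetric])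
  then have "\<bar>A - B\<bar> \<le> \<bar>A - B\<bar> / 2" using s(1) by simp
  then show False using ne by simp
qed

section \<open>Matrices\<close>

lemma matrix_mul_matrix_inv:
  fixes A :: "real^'n::finite^'n"
  assumes "det A \<noteq> 0"
  shows "A ** matrix_inv A = mat 1" "matrix_inv A ** A = mat 1"
proof -
  have "\<exists>A'. A ** A' = mat 1 \<and> A' ** A = mat 1"
    using assms invertible_det_nz unfolding invertible_def by blast
  then have "A ** matrix_inv A = mat 1 \<and> matrix_inv A ** A = mat 1"
    unfolding matrix_inv_def by (rule someI_ex)
  then show "A ** matrix_inv A = mat 1" "matrix_inv A ** A = mat 1" by auto
qed

lemma matrix_inv_mult_vector_cancel:
  fixes A :: "real^'n::finite^'n"
  assumes "det A \<noteq> 0"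
  shows "matrix_inv A *v (A *v x) = x" "A *v (matrix_inv A *v x) = x"
  using matrix_mul_matrix_inv[OF assms] by (simp_all add: matrix_vector_mul_assoc)

lemma matrix_inv_cramer:
  fixes A :: "real^'n::finite^'n"
  assumes "det A \<noteq> 0"
  shows "matrix_inv A $ l $ m = det (\<chi> i j. if j = l then (if i = m then 1 else 0) else A$i$j) / det A"
proof -
  define x where "x = matrix_inv A *v axis m 1"
  have "A *v x = axis m 1" unfolding x_def by (rule matrix_inv_mult_vector_cancel(2)[OF assms])
  then have "x $ l = det(\<chi> i j. if j=l then (axis m 1)$i else A$i$j) / det A"
    using cramer[OF assms] by simp
  moreover have "x $ l = matrix_inv A $ l $ m"
    unfolding x_def by (simp add: matrix_vector_mult_def axis_def if_distrib cong: if_cong)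
  moreover have "(\<chi> i j. if j=l then (axis m 1)$i else A$i$j)
      = (\<chi> i j. if j = l then (if i = m then 1 else 0) else A$i$j)"
    by (simp add: vec_eq_iff axis_def)
  ultimately show ?thesis by simp
qed

lemma matrix_inv_scaleR:
  fixes A :: "real^'n::finite^'n"
  assumes "det A \<noteq> 0" "k \<noteq> 0"
  shows "matrix_inv (k *\<^sub>R A) = (1/k) *\<^sub>R matrix_inv A"
proof -
  have "k *\<^sub>R A = (\<chi> i. k *s A $ i)" by (simp add: vec_eq_iff)
  then have "det (k *\<^sub>R A) = k ^ CARD('n) * det A" by (simp add: det_rows_mul)
  then have "det (k *\<^sub>R A) \<noteq> 0" using assms by simp
  have "matrix_inv (k *\<^sub>R A) = matrix_inv (k *\<^sub>R A) ** ((k *\<^sub>R A) ** ((1/k) *\<^sub>R matrix_inv A))"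
    using assms matrix_mul_matrix_inv(1)[OF assms(1)] by (simp add: matrix_scalar_ac)
  also have "\<dots> = (1/k) *\<^sub>R matrix_inv A"
    by (simp add: matrix_mul_assoc matrix_mul_matrix_inv(2)[OF \<open>det (k *\<^sub>R A) \<noteq> 0\<close>])
  finally show ?thesis .
qed

lemma differentiable_prod:
  fixes f :: "'i \<Rightarrow> 'a::real_normed_vector \<Rightarrow> real"
  assumes "finite I" "\<And>i. i \<in> I \<Longrightarrow> f i differentiable (at x)"
  shows "(\<lambda>y. \<Prod>i\<in>I. f i y) differentiable (at x)"
  using assms by (induction I rule: finite_induct) (simp_all add: differentiable_mult)

lemma det_differentiable:
  fixes M :: "'a::real_normed_vector \<Rightarrow> real^'n::finite^'n"
  assumes "\<And>i j. (\<lambda>y. M y $ i $ j) differentiable (at x)"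
  shows "(\<lambda>y. det (M y)) differentiable (at x)"
  unfolding det_def
  by (intro differentiable_sum differentiable_mult differentiable_const differentiable_prod ballI)
     (auto simp: finite_permutations assms)

lemma matrix_inv_differentiable:
  fixes M :: "'a::real_normed_vector \<Rightarrow> real^'n::finite^'n"
  assumes "\<And>i j. (\<lambda>y. M y $ i $ j) differentiable (at x)" "det (M x) \<noteq> 0"
  shows "(\<lambda>y. matrix_inv (M y) $ l $ m) differentiable (at x)"
proof -
  have dd: "(\<lambda>y. det (M y)) differentiable (at x)" by (rule det_differentiable[OF assms(1)])
  then obtain \<epsilon> where \<epsilon>: "\<epsilon> > 0" "\<And>y. dist x y < \<epsilon> \<Longrightarrow> det (M y) \<noteq> 0"
    using continuous_at_avoid[of x "\<lambda>y. det (M y)" 0] assms(2) differentiable_imp_continuous_within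
    by blast
  have "(\<lambda>y. det (\<chi> i j. if j = l then (if i = m then 1 else 0) else M y$i$j)) differentiable (at x)"
    by (rule det_differentiable, rename_tac i j, case_tac "j = l"; case_tac "i = m")
       (simp_all add: assms(1))
  then have "(\<lambda>y. det (\<chi> i j. if j = l then (if i = m then 1 else 0) else M y$i$j) / det (M y))
      differentiable (at x)"
    using dd assms(2) by (rule differentiable_divide)
  then show ?thesis
    by (rule differentiable_cong_open[of _ _ "ball x \<epsilon>"]) (simp_all add: matrix_inv_cramer \<epsilon>)
qed

lemma inner_matrix_vector_transpose: "inner ((J::real^'m::finite^'n::finite) *v a) w = inner a (transpose J *v w)"
  by (metis dot_lmul_matrix inner_commute transpose_matrix_vector)

lemma transpose_mult_vector_nth: "(transpose J *v t) $ l = inner (column l J) t"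
  by (simp add: matrix_vector_mult_def transpose_def column_def inner_vec_def mult.commute)

lemma exists_range_plus_normal:
  fixes A :: "real^'n::finite^'n" and J :: "real^'m::finite^'n" and N :: "real^'n"
  assumes card: "CARD('n) = CARD('m) + 1" and injJ: "inj ((*v) J)"
    and gNJ: "transpose J *v (A *v N) = 0" and gNN: "inner N (A *v N) = -1"
  shows "\<exists>a c. w = J *v a + c *\<^sub>R N"
proof -
  have lin: "linear ((*v) J)" by (rule matrix_vector_mul_linear)
  have sub: "subspace (range ((*v) J))" by (rule linear_subspace_image[OF lin subspace_UNIV])
  have spR: "span (range ((*v) J)) = range ((*v) J)" using sub by simp
  have dimR: "dim (range ((*v) J)) = CARD('m)"
    using dim_image_eq[OF lin, of UNIV] injJ by simp
  have "N \<notin> span (range ((*v) J))"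
  proof
    assume "N \<in> span (range ((*v) J))"
    then obtain a where a: "N = J *v a" unfolding spR by auto
    have "inner N (A *v N) = inner a (transpose J *v (A *v N))" unfolding a by (rule inner_matrix_vector_transpose)
    then show False using gNN gNJ by simp
  qed
  then have "dim (insert N (range ((*v) J))) = CARD('n)" using dim_insert[of N "range ((*v) J)"] dimR card by simp
  then have "span (insert N (range ((*v) J))) = UNIV" using dim_eq_full by (metis DIM_cart DIM_real mult_1_right)
  then have "w \<in> span (insert N (range ((*v) J)))" by simp
  then obtain c where "w - c *\<^sub>R N \<in> span (range ((*v) J))" unfolding span_insert by auto
  then obtain a where "w - c *\<^sub>R N = J *v a" unfolding spR by auto
  then have "w = J *v a + c *\<^sub>R N" by (simp add: algebra_simps)
  then show ?thesis by blast
qed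

context
  fixes A :: "real^'n::finite^'n" and J :: "real^'m::finite^'n" and N :: "real^'n"
  assumes card: "CARD('n) = CARD('m) + 1" and detA: "det A \<noteq> 0" and symA: "transpose A = A"
    and injJ: "inj ((*v) J)"
    and gNJ: "transpose J *v (A *v N) = 0" and gNN: "inner N (A *v N) = -1"
begin

lemma inner_symmetric_matrix: "inner x (A *v y) = inner (A *v x) y"
  using inner_matrix_vector_transpose[of A x y] symA by (simp add: inner_commute)

lemma det_restricted_form_nonzero: "det (transpose J ** A ** J) \<noteq> 0"
proof -
  define B where "B = transpose J ** A ** J"
  have Bv: "B *v a = transpose J *v (A *v (J *v a))" for a
    unfolding B_def by (simp add: matrix_vector_mul_assoc matrix_mul_assoc)
  have ker: "a = 0" if "B *v a = 0" for a
  proof -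
    have "inner w (A *v (J *v a)) = 0" for w
    proof -
      obtain b c where w: "w = J *v b + c *\<^sub>R N" using exists_range_plus_normal[OF card injJ gNJ gNN] by blast
      have "inner (J *v b) (A *v (J *v a)) = inner b (B *v a)" unfolding Bv by (rule inner_matrix_vector_transpose)
      moreover have "inner N (A *v (J *v a)) = inner a (transpose J *v (A *v N))"
        using inner_symmetric_matrix inner_matrix_vector_transpose by (metis inner_commute)
      ultimately show ?thesis using that gNJ unfolding w by (simp add: inner_add_left)
    qed
    then have "inner (A *v (J *v a)) (A *v (J *v a)) = 0" by blast
    then have "A *v (J *v a) = 0" by simp
    then have "J *v a = 0" using matrix_inv_mult_vector_cancel(1)[OF detA, of "J *v a"] by simp
    then show "a = 0" using injJ by (metis injD matrix_vector_mult_0_right)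
  qed
  have injB: "inj ((*v) B)"
  proof (rule injI)
    fix a b assume "B *v a = B *v b"
    then have "B *v (a - b) = 0" by (simp add: matrix_vector_mult_diff_distrib)
    then have "a - b = 0" by (rule ker)
    then show "a = b" by simp
  qed
  then show ?thesis
    unfolding B_def[symmetric] using det_nz_iff_inj[OF matrix_vector_mul_linear[of B]] by simp
qed

lemma inner_matrix_inv_split:
  "inner s (matrix_inv A *v t)
   = inner (transpose J *v s) (matrix_inv (transpose J ** A ** J) *v (transpose J *v t)) - inner s N * inner t N"
proof -
  define B where "B = transpose J ** A ** J"
  have Bv: "B *v a = transpose J *v (A *v (J *v a))" for a
    unfolding B_def by (simp add: matrix_vector_mul_assoc matrix_mul_assoc)
  define w where "w = matrix_inv A *v t"
  obtain a c where w: "w = J *v a + c *\<^sub>R N" using exists_range_plus_normal[OF card injJ gNJ gNN] by blast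
  have Aw: "A *v w = t" unfolding w_def by (rule matrix_inv_mult_vector_cancel(2)[OF detA])
  have "transpose J *v t = B *v a"
  proof -
    have "transpose J *v (A *v (c *\<^sub>R N)) = c *\<^sub>R (transpose J *v (A *v N))"
      by (simp only: matrix_vector_mult_scaleR)
    then show ?thesis unfolding Aw[symmetric] w Bv using gNJ
      by (simp only: matrix_vector_right_distrib) simp
  qed
  then have a: "a = matrix_inv B *v (transpose J *v t)" using matrix_inv_mult_vector_cancel(1)[OF det_restricted_form_nonzero[folded B_def]] by simp
  have "inner t N = inner w (A *v N)" unfolding Aw[symmetric] inner_symmetric_matrix[of w N] ..
  also have "\<dots> = inner a (transpose J *v (A *v N)) + c * inner N (A *v N)"
    unfolding w by (simp add: inner_add_left inner_matrix_vector_transpose)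
  finally have c: "c = - inner t N" using gNJ gNN by simp
  have "inner s w = inner (transpose J *v s) a + c * inner s N"
  proof -
    have "inner s (J *v a) = inner (transpose J *v s) a" using inner_matrix_vector_transpose[of J a s] by (simp only: inner_commute)
    then show ?thesis unfolding w by (simp add: inner_add_right)
  qed
  then show ?thesis
    unfolding w_def[symmetric] a c B_def by (simp add: mult.commute)
qed

end

section \<open>Curvature in terms of Christoffel symbols of the first kind\<close>

lemma sum_swap_inner: "(\<Sum>a\<in>A. \<Sum>b\<in>B. \<Sum>c\<in>C. f a b c) = (\<Sum>a\<in>A. \<Sum>c\<in>C. \<Sum>b\<in>B. f a b c)"
  by (rule sum.cong[OF refl], rule sum.swap)

lemma sum_rotate3: "(\<Sum>a\<in>A. \<Sum>b\<in>B. \<Sum>c\<in>C. f a b c) = (\<Sum>c\<in>C. \<Sum>a\<in>A. \<Sum>b\<in>B. f a b c)"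
proof -
  have "(\<Sum>a\<in>A. \<Sum>b\<in>B. \<Sum>c\<in>C. f a b c) = (\<Sum>a\<in>A. \<Sum>c\<in>C. \<Sum>b\<in>B. f a b c)" by (rule sum_swap_inner)
  also have "\<dots> = (\<Sum>c\<in>C. \<Sum>a\<in>A. \<Sum>b\<in>B. f a b c)" by (rule sum.swap)
  finally show ?thesis .
qed

lemma sum_rotate4: "(\<Sum>a\<in>A. \<Sum>b\<in>B. \<Sum>c\<in>C. \<Sum>d\<in>D. f a b c d) = (\<Sum>d\<in>D. \<Sum>a\<in>A. \<Sum>b\<in>B. \<Sum>c\<in>C. f a b c d)"
proof -
  have "(\<Sum>a\<in>A. \<Sum>b\<in>B. \<Sum>c\<in>C. \<Sum>d\<in>D. f a b c d) = (\<Sum>a\<in>A. \<Sum>d\<in>D. \<Sum>b\<in>B. \<Sum>c\<in>C. f a b c d)"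
    by (rule sum.cong[OF refl], rule sum_rotate3)
  also have "\<dots> = (\<Sum>d\<in>D. \<Sum>a\<in>A. \<Sum>b\<in>B. \<Sum>c\<in>C. f a b c d)" by (rule sum.swap)
  finally show ?thesis .
qed

lemma sum_rotate5: "(\<Sum>a\<in>A. \<Sum>b\<in>B. \<Sum>c\<in>C. \<Sum>d\<in>D. \<Sum>e\<in>E. f a b c d e) = (\<Sum>e\<in>E. \<Sum>a\<in>A. \<Sum>b\<in>B. \<Sum>c\<in>C. \<Sum>d\<in>D. f a b c d e)"
proof -
  have "(\<Sum>a\<in>A. \<Sum>b\<in>B. \<Sum>c\<in>C. \<Sum>d\<in>D. \<Sum>e\<in>E. f a b c d e) = (\<Sum>a\<in>A. \<Sum>e\<in>E. \<Sum>b\<in>B. \<Sum>c\<in>C. \<Sum>d\<in>D. f a b c d e)"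
    by (rule sum.cong[OF refl], rule sum_rotate4)
  also have "\<dots> = (\<Sum>e\<in>E. \<Sum>a\<in>A. \<Sum>b\<in>B. \<Sum>c\<in>C. \<Sum>d\<in>D. f a b c d e)" by (rule sum.swap)
  finally show ?thesis .
qed

lemma sum_kronecker_mult: fixes m :: "'j::finite" shows "(\<Sum>q\<in>UNIV. (if m = q then 1 else 0) * (a q::real)) = a m"
proof -
  have "\<And>q. (if m = q then 1 else 0) * a q = (if q = m then a q else 0)" by simp
  then have "(\<Sum>q\<in>UNIV. (if m = q then 1 else 0) * a q) = (\<Sum>q\<in>UNIV. if q = m then a q else 0)"
    by (intro sum.cong) auto
  also have "\<dots> = a m" by (subst sum.delta) auto
  finally show ?thesis .
qed

lemma gform_sym: "(\<And>i j. G y $ i $ j = G y $ j $ i) \<Longrightarrow> gform G y u w = gform G y w u"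
  unfolding gform_def by (subst sum.swap) (simp add: mult_ac)

lemma gform_inner: "gform G y A B = inner A (G y *v B)"
  unfolding gform_def inner_vec_def matrix_vector_mult_def by (simp add: sum_distrib_left mult_ac)

text \<open>
  For constant vector fields, \<open>christoffel1_form G y w u v = g(w, \<nabla>\<^sub>u v)\<close>, the vector
  \<open>christoffel1_vec G y u w\<close> is the covector \<open>g(\<nabla>\<^sub>u w, -)\<close>, \<open>inverse_form\<close> is the induced
  inner product on covectors, and \<open>dgform G y u w z = (D\<^sub>u g)(w, z)\<close>.
\<close>

definition christoffel1 :: "(real^'k::finite \<Rightarrow> real^'k^'k) \<Rightarrow> real^'k \<Rightarrow> 'k \<Rightarrow> 'k \<Rightarrow> 'k \<Rightarrow> real" where
  "christoffel1 G y m j k = (dpartial j (\<lambda>z. G z $ m $ k) y + dpartial k (\<lambda>z. G z $ m $ j) y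
         - dpartial m (\<lambda>z. G z $ j $ k) y) / 2"

lemma christoffel_eq_christoffel1:
  "christoffel G y l j k = (\<Sum>q\<in>UNIV. matrix_inv (G y) $ l $ q * christoffel1 G y q j k)"
  unfolding christoffel_def christoffel1_def by (simp add: sum_divide_distrib)

definition christoffel1_form :: "(real^'k::finite \<Rightarrow> real^'k^'k) \<Rightarrow> real^'k \<Rightarrow> real^'k \<Rightarrow> real^'k \<Rightarrow> real^'k \<Rightarrow> real" where
  "christoffel1_form G y w u v = (\<Sum>m\<in>UNIV. \<Sum>j\<in>UNIV. \<Sum>k\<in>UNIV. w$m * u$j * v$k * christoffel1 G y m j k)"

definition christoffel1_vec :: "(real^'k::finite \<Rightarrow> real^'k^'k) \<Rightarrow> real^'k \<Rightarrow> real^'k \<Rightarrow> real^'k \<Rightarrow> real^'k" where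
  "christoffel1_vec G y u w = (\<chi> l. \<Sum>i\<in>UNIV. \<Sum>m\<in>UNIV. u$i * w$m * christoffel1 G y l i m)"

definition inverse_form :: "(real^'k::finite \<Rightarrow> real^'k^'k) \<Rightarrow> real^'k \<Rightarrow> real^'k \<Rightarrow> real^'k \<Rightarrow> real" where
  "inverse_form G y s t = (\<Sum>l\<in>UNIV. \<Sum>q\<in>UNIV. s$l * matrix_inv (G y) $ l $ q * t$q)"

lemma christoffel1_form_inner: "christoffel1_form G y A U W = inner A (christoffel1_vec G y U W)"
  unfolding christoffel1_form_def christoffel1_vec_def inner_vec_def by (simp add: sum_distrib_left mult_ac)

lemma inverse_form_inner: "inverse_form G y s t = inner s (matrix_inv (G y) *v t)"
  unfolding inverse_form_def inner_vec_def matrix_vector_mult_def by (simp add: sum_distrib_left mult_ac)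

lemma christoffel1_vec_nth: "christoffel1_vec G y u w $ l = christoffel1_form G y (axis l 1) u w"
proof -
  have "christoffel1_form G y (axis l 1) u w = (\<Sum>m\<in>UNIV. axis l 1 $ m * (\<Sum>j\<in>UNIV. \<Sum>k\<in>UNIV. u$j * w$k * christoffel1 G y m j k))"
    unfolding christoffel1_form_def by (simp add: sum_distrib_left mult_ac)
  also have "\<dots> = (\<Sum>j\<in>UNIV. \<Sum>k\<in>UNIV. u$j * w$k * christoffel1 G y l j k)" by (rule sum_axis_mult)
  finally show ?thesis by (simp add: christoffel1_vec_def)
qed

definition dgform :: "(real^'n::finite \<Rightarrow> real^'n^'n) \<Rightarrow> real^'n \<Rightarrow> real^'n \<Rightarrow> real^'n \<Rightarrow> real^'n \<Rightarrow> real" where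
  "dgform G y u w z = (\<Sum>i\<in>UNIV. \<Sum>j\<in>UNIV. w$i * (\<Sum>r\<in>UNIV. u$r * dpartial r (\<lambda>y. G y $ i $ j) y) * z$j)"

lemma dgform_expand: "dgform G y u w z = (\<Sum>m\<in>UNIV. \<Sum>k\<in>UNIV. \<Sum>j\<in>UNIV. w$m * u$j * z$k * dpartial j (\<lambda>y. G y $ m $ k) y)"
  unfolding dgform_def by (simp add: sum_distrib_left sum_distrib_right mult_ac)

lemma christoffel1_form_dgform: "christoffel1_form G y w u z = (dgform G y u w z + dgform G y z w u - dgform G y w u z) / 2"
proof -
  have a: "dgform G y u w z = (\<Sum>m\<in>UNIV. \<Sum>j\<in>UNIV. \<Sum>k\<in>UNIV. w$m * u$j * z$k * dpartial j (\<lambda>y. G y $ m $ k) y)"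
    unfolding dgform_expand by (rule sum_swap_inner)
  have b: "dgform G y z w u = (\<Sum>m\<in>UNIV. \<Sum>j\<in>UNIV. \<Sum>k\<in>UNIV. w$m * u$j * z$k * dpartial k (\<lambda>y. G y $ m $ j) y)"
    unfolding dgform_expand by (simp add: mult_ac)
  have c: "dgform G y w u z = (\<Sum>m\<in>UNIV. \<Sum>j\<in>UNIV. \<Sum>k\<in>UNIV. w$m * u$j * z$k * dpartial m (\<lambda>y. G y $ j $ k) y)"
  proof -
    have "dgform G y w u z = (\<Sum>j\<in>UNIV. \<Sum>k\<in>UNIV. \<Sum>m\<in>UNIV. w$m * u$j * z$k * dpartial m (\<lambda>y. G y $ j $ k) y)"
      unfolding dgform_expand by (simp add: mult_ac)
    also have "\<dots> = (\<Sum>m\<in>UNIV. \<Sum>j\<in>UNIV. \<Sum>k\<in>UNIV. w$m * u$j * z$k * dpartial m (\<lambda>y. G y $ j $ k) y)"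
      by (rule sum_rotate3)
    finally show ?thesis .
  qed
  show ?thesis unfolding a b c christoffel1_form_def christoffel1_def
    by (simp add: sum_divide_distrib sum.distrib sum_subtractf algebra_simps diff_divide_distrib add_divide_distrib)
qed

lemma gform_lin_left: "gform G y (\<chi> i. \<Sum>e\<in>UNIV. c e * A e $ i) B = (\<Sum>e\<in>UNIV. c e * gform G y (A e) B)"
proof -
  have "gform G y (\<chi> i. \<Sum>e\<in>UNIV. c e * A e $ i) B = (\<Sum>i\<in>UNIV. \<Sum>j\<in>UNIV. \<Sum>e\<in>UNIV. c e * (A e $ i * G y $ i $ j * B $ j))"
    unfolding gform_def by (simp add: sum_distrib_right sum_distrib_left mult_ac)
  also have "\<dots> = (\<Sum>e\<in>UNIV. \<Sum>i\<in>UNIV. \<Sum>j\<in>UNIV. c e * (A e $ i * G y $ i $ j * B $ j))" by (rule sum_rotate3)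
  also have "\<dots> = (\<Sum>e\<in>UNIV. c e * gform G y (A e) B)" unfolding gform_def by (simp add: sum_distrib_left)
  finally show ?thesis .
qed

lemma gform_lin_right: "gform G y A (\<chi> i. \<Sum>e\<in>UNIV. c e * B e $ i) = (\<Sum>e\<in>UNIV. c e * gform G y A (B e))"
proof -
  have "gform G y A (\<chi> i. \<Sum>e\<in>UNIV. c e * B e $ i) = (\<Sum>i\<in>UNIV. \<Sum>j\<in>UNIV. \<Sum>e\<in>UNIV. c e * (A $ i * G y $ i $ j * B e $ j))"
    unfolding gform_def by (simp add: sum_distrib_left mult_ac)
  also have "\<dots> = (\<Sum>e\<in>UNIV. \<Sum>i\<in>UNIV. \<Sum>j\<in>UNIV. c e * (A $ i * G y $ i $ j * B e $ j))" by (rule sum_rotate3)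
  also have "\<dots> = (\<Sum>e\<in>UNIV. c e * gform G y A (B e))" unfolding gform_def by (simp add: sum_distrib_left)
  finally show ?thesis .
qed

lemma christoffel1_form_lin1: "christoffel1_form G y (\<chi> i. \<Sum>e\<in>UNIV. c e * A e $ i) B D = (\<Sum>e\<in>UNIV. c e * christoffel1_form G y (A e) B D)"
proof -
  have "christoffel1_form G y (\<chi> i. \<Sum>e\<in>UNIV. c e * A e $ i) B D = (\<Sum>m\<in>UNIV. \<Sum>j\<in>UNIV. \<Sum>k\<in>UNIV. \<Sum>e\<in>UNIV. c e * (A e $ m * B $ j * D $ k * christoffel1 G y m j k))"
    unfolding christoffel1_form_def by (simp add: sum_distrib_right sum_distrib_left mult_ac)
  also have "\<dots> = (\<Sum>e\<in>UNIV. \<Sum>m\<in>UNIV. \<Sum>j\<in>UNIV. \<Sum>k\<in>UNIV. c e * (A e $ m * B $ j * D $ k * christoffel1 G y m j k))" by (rule sum_rotate4)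
  also have "\<dots> = (\<Sum>e\<in>UNIV. c e * christoffel1_form G y (A e) B D)" unfolding christoffel1_form_def by (simp add: sum_distrib_left)
  finally show ?thesis .
qed

lemma christoffel1_form_lin2: "christoffel1_form G y A (\<chi> i. \<Sum>e\<in>UNIV. c e * B e $ i) D = (\<Sum>e\<in>UNIV. c e * christoffel1_form G y A (B e) D)"
proof -
  have "christoffel1_form G y A (\<chi> i. \<Sum>e\<in>UNIV. c e * B e $ i) D = (\<Sum>m\<in>UNIV. \<Sum>j\<in>UNIV. \<Sum>k\<in>UNIV. \<Sum>e\<in>UNIV. c e * (A $ m * B e $ j * D $ k * christoffel1 G y m j k))"
    unfolding christoffel1_form_def by (simp add: sum_distrib_right sum_distrib_left mult_ac)
  also have "\<dots> = (\<Sum>e\<in>UNIV. \<Sum>m\<in>UNIV. \<Sum>j\<in>UNIV. \<Sum>k\<in>UNIV. c e * (A $ m * B e $ j * D $ k * christoffel1 G y m j k))" by (rule sum_rotate4)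
  also have "\<dots> = (\<Sum>e\<in>UNIV. c e * christoffel1_form G y A (B e) D)" unfolding christoffel1_form_def by (simp add: sum_distrib_left)
  finally show ?thesis .
qed

lemma christoffel1_form_lin3: "christoffel1_form G y A B (\<chi> i. \<Sum>e\<in>UNIV. c e * D e $ i) = (\<Sum>e\<in>UNIV. c e * christoffel1_form G y A B (D e))"
proof -
  have "christoffel1_form G y A B (\<chi> i. \<Sum>e\<in>UNIV. c e * D e $ i) = (\<Sum>m\<in>UNIV. \<Sum>j\<in>UNIV. \<Sum>k\<in>UNIV. \<Sum>e\<in>UNIV. c e * (A $ m * B $ j * D e $ k * christoffel1 G y m j k))"
    unfolding christoffel1_form_def by (simp add: sum_distrib_right sum_distrib_left mult_ac)
  also have "\<dots> = (\<Sum>e\<in>UNIV. \<Sum>m\<in>UNIV. \<Sum>j\<in>UNIV. \<Sum>k\<in>UNIV. c e * (A $ m * B $ j * D e $ k * christoffel1 G y m j k))" by (rule sum_rotate4)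
  also have "\<dots> = (\<Sum>e\<in>UNIV. c e * christoffel1_form G y A B (D e))" unfolding christoffel1_form_def by (simp add: sum_distrib_left)
  finally show ?thesis .
qed

lemma sum_christoffel1_christoffel:
  "(\<Sum>m\<in>UNIV. \<Sum>i\<in>UNIV. \<Sum>j\<in>UNIV. \<Sum>k\<in>UNIV.
      A$m * B$i * C$j * D$k * (\<Sum>l\<in>UNIV. christoffel1 G x l i m * christoffel G x l j k))
   = inverse_form G x (christoffel1_vec G x B A) (christoffel1_vec G x C D)"
proof -
  define F where "F = (\<lambda>m i j k l q. A$m * B$i * C$j * D$k
    * (christoffel1 G x l i m * (matrix_inv (G x) $ l $ q * christoffel1 G x q j k)))"
  have "(\<Sum>m\<in>UNIV. \<Sum>i\<in>UNIV. \<Sum>j\<in>UNIV. \<Sum>k\<in>UNIV.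
      A$m * B$i * C$j * D$k * (\<Sum>l\<in>UNIV. christoffel1 G x l i m * christoffel G x l j k))
      = (\<Sum>m\<in>UNIV. \<Sum>i\<in>UNIV. \<Sum>j\<in>UNIV. \<Sum>k\<in>UNIV. \<Sum>l\<in>UNIV. \<Sum>q\<in>UNIV. F m i j k l q)"
    unfolding F_def christoffel_eq_christoffel1 by (simp add: sum_distrib_left)
  also have "\<dots> = (\<Sum>l\<in>UNIV. \<Sum>m\<in>UNIV. \<Sum>i\<in>UNIV. \<Sum>j\<in>UNIV. \<Sum>k\<in>UNIV. \<Sum>q\<in>UNIV. F m i j k l q)"
    by (rule sum_rotate5)
  also have "\<dots> = (\<Sum>l\<in>UNIV. \<Sum>q\<in>UNIV. \<Sum>m\<in>UNIV. \<Sum>i\<in>UNIV. \<Sum>j\<in>UNIV. \<Sum>k\<in>UNIV. F m i j k l q)"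
    by (rule sum.cong[OF refl], rule sum_rotate5)
  also have "\<dots> = (\<Sum>l\<in>UNIV. \<Sum>q\<in>UNIV. \<Sum>i\<in>UNIV. \<Sum>m\<in>UNIV. \<Sum>j\<in>UNIV. \<Sum>k\<in>UNIV. F m i j k l q)"
    by (rule sum.cong[OF refl], rule sum.cong[OF refl], rule sum.swap)
  also have "\<dots> = inverse_form G x (christoffel1_vec G x B A) (christoffel1_vec G x C D)"
    unfolding inverse_form_def christoffel1_vec_def F_def by (simp add: sum_distrib_left sum_distrib_right mult_ac)
  finally show ?thesis .
qed

lemma dpartial_christoffel1_form:
  assumes "\<And>m j k. (\<lambda>y. christoffel1 G y m j k) differentiable (at x)"
  shows "dpartial i (\<lambda>y. christoffel1_form G y w u v) x
   = (\<Sum>m\<in>UNIV. \<Sum>j\<in>UNIV. \<Sum>k\<in>UNIV. w$m * u$j * v$k * dpartial i (\<lambda>y. christoffel1 G y m j k) x)"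
  unfolding christoffel1_form_def
  by (simp add: dpartial_sum dpartial_cmult assms differentiable_sum)

locale local_metric =
  fixes G :: "real^'k::finite \<Rightarrow> real^'k^'k" and S :: "(real^'k) set" and x :: "real^'k"
  assumes S: "open S" "x \<in> S"
    and metric_differentiable: "\<And>y m k. y \<in> S \<Longrightarrow> (\<lambda>z. G z $ m $ k) differentiable (at y)"
    and metric_sym: "\<And>y m k. y \<in> S \<Longrightarrow> G y $ m $ k = G y $ k $ m"
    and dpartial_metric_differentiable: "\<And>j m k. (\<lambda>y. dpartial j (\<lambda>z. G z $ m $ k) y) differentiable (at x)"
    and det_metric_nonzero: "\<And>y. y \<in> S \<Longrightarrow> det (G y) \<noteq> 0"
begin

lemma christoffel1_differentiable: "(\<lambda>y. christoffel1 G y m j k) differentiable (at x)"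
  unfolding christoffel1_def by (intro differentiable_divide differentiable_add differentiable_diff dpartial_metric_differentiable) auto

lemma matrix_inv_metric_differentiable: "(\<lambda>y. matrix_inv (G y) $ l $ q) differentiable (at x)"
  by (rule matrix_inv_differentiable) (use metric_differentiable det_metric_nonzero S in auto)

lemma dpartial_metric_sym: "dpartial i (\<lambda>z. G z $ m $ l) x = dpartial i (\<lambda>z. G z $ l $ m) x"
  by (rule dpartial_cong_open[OF S]) (simp add: metric_sym)

lemma dpartial_metric_christoffel1: "dpartial i (\<lambda>z. G z $ m $ l) x = christoffel1 G x m i l + christoffel1 G x l i m"
  unfolding christoffel1_def using dpartial_metric_sym[of i m l] dpartial_metric_sym[of l m i] dpartial_metric_sym[of m l i] by (simp add: field_simps)

lemma metric_mult_matrix_inv: "(\<Sum>l\<in>UNIV. G y $ m $ l * matrix_inv (G y) $ l $ q) = (if m = q then 1 else 0)" if "y \<in> S"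
proof -
  have "(G y ** matrix_inv (G y)) $ m $ q = mat 1 $ m $ q" using matrix_mul_matrix_inv(1)[OF det_metric_nonzero[OF that]] by simp
  then show ?thesis by (simp add: matrix_matrix_mult_def mat_def)
qed

lemma metric_mult_dpartial_matrix_inv:
  "(\<Sum>l\<in>UNIV. G x $ m $ l * dpartial i (\<lambda>y. matrix_inv (G y) $ l $ q) x)
    = - (\<Sum>l\<in>UNIV. dpartial i (\<lambda>y. G y $ m $ l) x * matrix_inv (G x) $ l $ q)"
proof -
  have "dpartial i (\<lambda>y. \<Sum>l\<in>UNIV. G y $ m $ l * matrix_inv (G y) $ l $ q) x
        = dpartial i (\<lambda>y. (if m = q then 1 else 0)) x"
    by (rule dpartial_cong_open[OF S]) (simp add: metric_mult_matrix_inv)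
  also have "\<dots> = 0" by (rule dpartial_const)
  finally have "(\<Sum>l\<in>UNIV. dpartial i (\<lambda>y. G y $ m $ l * matrix_inv (G y) $ l $ q) x) = 0"
    by (subst (asm) dpartial_sum) (auto intro!: differentiable_mult metric_differentiable S matrix_inv_metric_differentiable)
  then have "(\<Sum>l\<in>UNIV. dpartial i (\<lambda>y. G y $ m $ l) x * matrix_inv (G x) $ l $ q
        + G x $ m $ l * dpartial i (\<lambda>y. matrix_inv (G y) $ l $ q) x) = 0"
    by (subst (asm) dpartial_mult) (auto intro!: metric_differentiable S matrix_inv_metric_differentiable)
  then show ?thesis by (simp add: sum.distrib eq_neg_iff_add_eq_0 add.commute)
qed

lemma lower_dpartial_christoffel:
  "(\<Sum>l\<in>UNIV. G x $ m $ l * dpartial i (\<lambda>y. christoffel G y l j k) x)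
   = dpartial i (\<lambda>y. christoffel1 G y m j k) x - (\<Sum>l\<in>UNIV. dpartial i (\<lambda>y. G y $ m $ l) x * christoffel G x l j k)"
proof -
  have D1: "dpartial i (\<lambda>y. christoffel G y l j k) x = (\<Sum>q\<in>UNIV. dpartial i (\<lambda>y. matrix_inv (G y) $ l $ q) x * christoffel1 G x q j k
       + matrix_inv (G x) $ l $ q * dpartial i (\<lambda>y. christoffel1 G y q j k) x)" for l
    unfolding christoffel_eq_christoffel1
    by (subst dpartial_sum) (auto intro!: differentiable_mult matrix_inv_metric_differentiable christoffel1_differentiable sum.cong simp: dpartial_mult matrix_inv_metric_differentiable christoffel1_differentiable)
  have "(\<Sum>l\<in>UNIV. G x $ m $ l * dpartial i (\<lambda>y. christoffel G y l j k) x)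
      = (\<Sum>l\<in>UNIV. \<Sum>q\<in>UNIV. G x $ m $ l * dpartial i (\<lambda>y. matrix_inv (G y) $ l $ q) x * christoffel1 G x q j k
       + G x $ m $ l * matrix_inv (G x) $ l $ q * dpartial i (\<lambda>y. christoffel1 G y q j k) x)"
    by (simp add: D1 sum_distrib_left algebra_simps)
  also have "\<dots> = (\<Sum>q\<in>UNIV. \<Sum>l\<in>UNIV. G x $ m $ l * dpartial i (\<lambda>y. matrix_inv (G y) $ l $ q) x * christoffel1 G x q j k
       + G x $ m $ l * matrix_inv (G x) $ l $ q * dpartial i (\<lambda>y. christoffel1 G y q j k) x)"
    by (rule sum.swap)
  also have "\<dots> = (\<Sum>q\<in>UNIV. (\<Sum>l\<in>UNIV. G x $ m $ l * dpartial i (\<lambda>y. matrix_inv (G y) $ l $ q) x) * christoffel1 G x q j k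
       + (\<Sum>l\<in>UNIV. G x $ m $ l * matrix_inv (G x) $ l $ q) * dpartial i (\<lambda>y. christoffel1 G y q j k) x)"
    by (simp add: sum.distrib sum_distrib_right)
  also have "\<dots> = (\<Sum>q\<in>UNIV. - ((\<Sum>l\<in>UNIV. dpartial i (\<lambda>y. G y $ m $ l) x * matrix_inv (G x) $ l $ q) * christoffel1 G x q j k)
       + (if m = q then 1 else 0) * dpartial i (\<lambda>y. christoffel1 G y q j k) x)"
    by (simp only: metric_mult_dpartial_matrix_inv metric_mult_matrix_inv[OF S(2)] mult_minus_left)
  also have "\<dots> = (\<Sum>q\<in>UNIV. (if m = q then 1 else 0) * dpartial i (\<lambda>y. christoffel1 G y q j k) x)
      - (\<Sum>q\<in>UNIV. (\<Sum>l\<in>UNIV. dpartial i (\<lambda>y. G y $ m $ l) x * matrix_inv (G x) $ l $ q) * christoffel1 G x q j k)"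
    by (simp only: sum.distrib sum_negf)
  also have "(\<Sum>q\<in>UNIV. (if m = q then 1 else 0) * dpartial i (\<lambda>y. christoffel1 G y q j k) x) = dpartial i (\<lambda>y. christoffel1 G y m j k) x"
    by (rule sum_kronecker_mult)
  also have "(\<Sum>q\<in>UNIV. (\<Sum>l\<in>UNIV. dpartial i (\<lambda>y. G y $ m $ l) x * matrix_inv (G x) $ l $ q) * christoffel1 G x q j k)
      = (\<Sum>q\<in>UNIV. \<Sum>l\<in>UNIV. dpartial i (\<lambda>y. G y $ m $ l) x * (matrix_inv (G x) $ l $ q * christoffel1 G x q j k))"
    by (simp add: sum_distrib_right mult.assoc)
  also have "\<dots> = (\<Sum>l\<in>UNIV. \<Sum>q\<in>UNIV. dpartial i (\<lambda>y. G y $ m $ l) x * (matrix_inv (G x) $ l $ q * christoffel1 G x q j k))"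
    by (rule sum.swap)
  also have "\<dots> = (\<Sum>l\<in>UNIV. dpartial i (\<lambda>y. G y $ m $ l) x * christoffel G x l j k)"
    unfolding christoffel_eq_christoffel1 by (simp add: sum_distrib_left)
  finally show ?thesis .
qed

lemma lower_christoffel: "(\<Sum>l\<in>UNIV. G x $ m $ l * christoffel G x l i p) = christoffel1 G x m i p"
proof -
  have "(\<Sum>l\<in>UNIV. G x $ m $ l * christoffel G x l i p)
      = (\<Sum>l\<in>UNIV. \<Sum>q\<in>UNIV. G x $ m $ l * matrix_inv (G x) $ l $ q * christoffel1 G x q i p)"
    unfolding christoffel_eq_christoffel1 by (simp add: sum_distrib_left mult.assoc)
  also have "\<dots> = (\<Sum>q\<in>UNIV. \<Sum>l\<in>UNIV. G x $ m $ l * matrix_inv (G x) $ l $ q * christoffel1 G x q i p)"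
    by (rule sum.swap)
  also have "\<dots> = (\<Sum>q\<in>UNIV. (\<Sum>l\<in>UNIV. G x $ m $ l * matrix_inv (G x) $ l $ q) * christoffel1 G x q i p)"
    by (simp add: sum_distrib_right)
  also have "\<dots> = christoffel1 G x m i p" by (simp only: metric_mult_matrix_inv[OF S(2)] sum_kronecker_mult)
  finally show ?thesis .
qed

lemma lower_christoffel_product: "(\<Sum>l\<in>UNIV. G x $ m $ l * (\<Sum>p\<in>UNIV. christoffel G x p j k * christoffel G x l i p))
   = (\<Sum>p\<in>UNIV. christoffel G x p j k * christoffel1 G x m i p)"
proof -
  have "(\<Sum>l\<in>UNIV. G x $ m $ l * (\<Sum>p\<in>UNIV. christoffel G x p j k * christoffel G x l i p))
     = (\<Sum>l\<in>UNIV. \<Sum>p\<in>UNIV. christoffel G x p j k * (G x $ m $ l * christoffel G x l i p))"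
    by (simp add: sum_distrib_left mult_ac)
  also have "\<dots> = (\<Sum>p\<in>UNIV. \<Sum>l\<in>UNIV. christoffel G x p j k * (G x $ m $ l * christoffel G x l i p))"
    by (rule sum.swap)
  also have "\<dots> = (\<Sum>p\<in>UNIV. christoffel G x p j k * christoffel1 G x m i p)"
    by (simp add: sum_distrib_left[symmetric] lower_christoffel)
  finally show ?thesis .
qed

lemma lower_riemann:
  "(\<Sum>l\<in>UNIV. G x $ m $ l * riemann G x l i j k)
   = dpartial i (\<lambda>y. christoffel1 G y m j k) x - dpartial j (\<lambda>y. christoffel1 G y m i k) x
     - (\<Sum>l\<in>UNIV. christoffel1 G x l i m * christoffel G x l j k)
     + (\<Sum>l\<in>UNIV. christoffel1 G x l j m * christoffel G x l i k)"
proof -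
  have "(\<Sum>l\<in>UNIV. G x $ m $ l * riemann G x l i j k)
     = (\<Sum>l\<in>UNIV. G x $ m $ l * dpartial i (\<lambda>y. christoffel G y l j k) x)
     - (\<Sum>l\<in>UNIV. G x $ m $ l * dpartial j (\<lambda>y. christoffel G y l i k) x)
     + (\<Sum>l\<in>UNIV. G x $ m $ l * (\<Sum>p\<in>UNIV. christoffel G x p j k * christoffel G x l i p))
     - (\<Sum>l\<in>UNIV. G x $ m $ l * (\<Sum>p\<in>UNIV. christoffel G x p i k * christoffel G x l j p))"
    unfolding riemann_def
    by (simp add: sum_subtractf right_diff_distrib distrib_left sum.distrib)
  also have "\<dots> = dpartial i (\<lambda>y. christoffel1 G y m j k) x - (\<Sum>l\<in>UNIV. (christoffel1 G x m i l + christoffel1 G x l i m) * christoffel G x l j k)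
     - (dpartial j (\<lambda>y. christoffel1 G y m i k) x - (\<Sum>l\<in>UNIV. (christoffel1 G x m j l + christoffel1 G x l j m) * christoffel G x l i k))
     + (\<Sum>p\<in>UNIV. christoffel G x p j k * christoffel1 G x m i p)
     - (\<Sum>p\<in>UNIV. christoffel G x p i k * christoffel1 G x m j p)"
    by (simp only: lower_dpartial_christoffel lower_christoffel_product dpartial_metric_christoffel1)
  also have "\<dots> = dpartial i (\<lambda>y. christoffel1 G y m j k) x - dpartial j (\<lambda>y. christoffel1 G y m i k) x
     - (\<Sum>l\<in>UNIV. christoffel1 G x l i m * christoffel G x l j k)
     + (\<Sum>l\<in>UNIV. christoffel1 G x l j m * christoffel G x l i k)"
    by (simp add: algebra_simps sum.distrib)
  finally show ?thesis .
qed

lemma christoffel_differentiable: "(\<lambda>y. christoffel G y l j k) differentiable (at x)"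
  unfolding christoffel_eq_christoffel1 by (intro differentiable_sum ballI differentiable_mult matrix_inv_metric_differentiable christoffel1_differentiable) auto

lemma gform_curv_vec: "gform G x (curv_vec G x X Y Z) W
   = (\<Sum>m\<in>UNIV. \<Sum>i\<in>UNIV. \<Sum>j\<in>UNIV. \<Sum>k\<in>UNIV. (W$m * X$i * Y$j * Z$k) * (\<Sum>l\<in>UNIV. G x $ m $ l * riemann G x l i j k))"
proof -
  define V where "V = curv_vec G x X Y Z"
  have "gform G x V W = (\<Sum>a\<in>UNIV. \<Sum>b\<in>UNIV. V$a * G x $ a $ b * W$b)" unfolding gform_def ..
  also have "\<dots> = (\<Sum>b\<in>UNIV. \<Sum>a\<in>UNIV. V$a * G x $ a $ b * W$b)" by (rule sum.swap)
  also have "\<dots> = (\<Sum>m\<in>UNIV. W$m * (\<Sum>l\<in>UNIV. G x $ m $ l * V$l))"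
    by (simp add: sum_distrib_left metric_sym[OF S(2)] mult_ac)
  also have "\<dots> = (\<Sum>m\<in>UNIV. \<Sum>i\<in>UNIV. \<Sum>j\<in>UNIV. \<Sum>k\<in>UNIV. (W$m * X$i * Y$j * Z$k) * (\<Sum>l\<in>UNIV. G x $ m $ l * riemann G x l i j k))"
  proof (rule sum.cong[OF refl])
    fix m
    have "(\<Sum>l\<in>UNIV. G x $ m $ l * V$l) = (\<Sum>l\<in>UNIV. \<Sum>i\<in>UNIV. \<Sum>j\<in>UNIV. \<Sum>k\<in>UNIV. (X$i * Y$j * Z$k) * (G x $ m $ l * riemann G x l i j k))"
      unfolding V_def curv_vec_def by (simp add: sum_distrib_left mult_ac)
    also have "\<dots> = (\<Sum>i\<in>UNIV. \<Sum>j\<in>UNIV. \<Sum>k\<in>UNIV. \<Sum>l\<in>UNIV. (X$i * Y$j * Z$k) * (G x $ m $ l * riemann G x l i j k))"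
      by (rule sum_rotate4[symmetric])
    also have "\<dots> = (\<Sum>i\<in>UNIV. \<Sum>j\<in>UNIV. \<Sum>k\<in>UNIV. (X$i * Y$j * Z$k) * (\<Sum>l\<in>UNIV. G x $ m $ l * riemann G x l i j k))"
      by (simp add: sum_distrib_left)
    finally show "W$m * (\<Sum>l\<in>UNIV. G x $ m $ l * V$l) = (\<Sum>i\<in>UNIV. \<Sum>j\<in>UNIV. \<Sum>k\<in>UNIV. (W$m * X$i * Y$j * Z$k) * (\<Sum>l\<in>UNIV. G x $ m $ l * riemann G x l i j k))"
      by (simp add: sum_distrib_left mult_ac)
  qed
  finally show ?thesis unfolding V_def .
qed

lemma curvature_form_christoffel1:
  "gform G x (curv_vec G x X Y Y) X
   = (\<Sum>i\<in>UNIV. X$i * dpartial i (\<lambda>y. christoffel1_form G y X Y Y) x) - (\<Sum>i\<in>UNIV. Y$i * dpartial i (\<lambda>y. christoffel1_form G y X X Y) x)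
     - inverse_form G x (christoffel1_vec G x X X) (christoffel1_vec G x Y Y) + inverse_form G x (christoffel1_vec G x Y X) (christoffel1_vec G x X Y)"
proof -
  define w where "w = (\<lambda>m i j k. X$m * X$i * Y$j * Y$k)"
  define dA where "dA = (\<lambda>m i j k. dpartial i (\<lambda>y. christoffel1 G y m j k) x)"
  define dB where "dB = (\<lambda>m i j k. dpartial j (\<lambda>y. christoffel1 G y m i k) x)"
  define Q1 where "Q1 = (\<lambda>m i j k. \<Sum>l\<in>UNIV. christoffel1 G x l i m * christoffel G x l j k)"
  define Q2 where "Q2 = (\<lambda>m i j k. \<Sum>l\<in>UNIV. christoffel1 G x l j m * christoffel G x l i k)"
  have "gform G x (curv_vec G x X Y Y) X
     = (\<Sum>m\<in>UNIV. \<Sum>i\<in>UNIV. \<Sum>j\<in>UNIV. \<Sum>k\<in>UNIV. w m i j k * (dA m i j k - dB m i j k - Q1 m i j k + Q2 m i j k))"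
    unfolding gform_curv_vec lower_riemann w_def dA_def dB_def Q1_def Q2_def ..
  also have "\<dots> = (\<Sum>m\<in>UNIV. \<Sum>i\<in>UNIV. \<Sum>j\<in>UNIV. \<Sum>k\<in>UNIV. w m i j k * dA m i j k)
     - (\<Sum>m\<in>UNIV. \<Sum>i\<in>UNIV. \<Sum>j\<in>UNIV. \<Sum>k\<in>UNIV. w m i j k * dB m i j k)
     - (\<Sum>m\<in>UNIV. \<Sum>i\<in>UNIV. \<Sum>j\<in>UNIV. \<Sum>k\<in>UNIV. w m i j k * Q1 m i j k)
     + (\<Sum>m\<in>UNIV. \<Sum>i\<in>UNIV. \<Sum>j\<in>UNIV. \<Sum>k\<in>UNIV. w m i j k * Q2 m i j k)"
    by (simp add: algebra_simps sum.distrib sum_subtractf)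
  also have "(\<Sum>m\<in>UNIV. \<Sum>i\<in>UNIV. \<Sum>j\<in>UNIV. \<Sum>k\<in>UNIV. w m i j k * dA m i j k)
      = (\<Sum>i\<in>UNIV. X$i * dpartial i (\<lambda>y. christoffel1_form G y X Y Y) x)"
  proof -
    have "(\<Sum>m\<in>UNIV. \<Sum>i\<in>UNIV. \<Sum>j\<in>UNIV. \<Sum>k\<in>UNIV. w m i j k * dA m i j k)
        = (\<Sum>i\<in>UNIV. \<Sum>m\<in>UNIV. \<Sum>j\<in>UNIV. \<Sum>k\<in>UNIV. w m i j k * dA m i j k)"
      by (rule sum.swap)
    also have "\<dots> = (\<Sum>i\<in>UNIV. X$i * dpartial i (\<lambda>y. christoffel1_form G y X Y Y) x)"
      unfolding dpartial_christoffel1_form[OF christoffel1_differentiable] w_def dA_def by (simp add: sum_distrib_left mult_ac)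
    finally show ?thesis .
  qed
  also have "(\<Sum>m\<in>UNIV. \<Sum>i\<in>UNIV. \<Sum>j\<in>UNIV. \<Sum>k\<in>UNIV. w m i j k * dB m i j k)
      = (\<Sum>i\<in>UNIV. Y$i * dpartial i (\<lambda>y. christoffel1_form G y X X Y) x)"
  proof -
    have "(\<Sum>m\<in>UNIV. \<Sum>i\<in>UNIV. \<Sum>j\<in>UNIV. \<Sum>k\<in>UNIV. w m i j k * dB m i j k)
        = (\<Sum>j\<in>UNIV. \<Sum>m\<in>UNIV. \<Sum>i\<in>UNIV. \<Sum>k\<in>UNIV. w m i j k * dB m i j k)"
      by (rule sum_rotate3)
    also have "\<dots> = (\<Sum>i\<in>UNIV. Y$i * dpartial i (\<lambda>y. christoffel1_form G y X X Y) x)"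
      unfolding dpartial_christoffel1_form[OF christoffel1_differentiable] w_def dB_def by (simp add: sum_distrib_left mult_ac)
    finally show ?thesis .
  qed
  also have "(\<Sum>m\<in>UNIV. \<Sum>i\<in>UNIV. \<Sum>j\<in>UNIV. \<Sum>k\<in>UNIV. w m i j k * Q1 m i j k)
      = inverse_form G x (christoffel1_vec G x X X) (christoffel1_vec G x Y Y)"
    unfolding w_def Q1_def by (rule sum_christoffel1_christoffel)
  also have "(\<Sum>m\<in>UNIV. \<Sum>i\<in>UNIV. \<Sum>j\<in>UNIV. \<Sum>k\<in>UNIV. w m i j k * Q2 m i j k)
      = inverse_form G x (christoffel1_vec G x Y X) (christoffel1_vec G x X Y)"
  proof -
    have "(\<Sum>m\<in>UNIV. \<Sum>i\<in>UNIV. \<Sum>j\<in>UNIV. \<Sum>k\<in>UNIV. w m i j k * Q2 m i j k)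
      = (\<Sum>m\<in>UNIV. \<Sum>j\<in>UNIV. \<Sum>i\<in>UNIV. \<Sum>k\<in>UNIV.
          X$m * Y$j * X$i * Y$k * (\<Sum>l\<in>UNIV. christoffel1 G x l j m * christoffel G x l i k))"
      unfolding w_def Q2_def by (rule sum.cong[OF refl], rule trans[OF sum.swap]) (simp add: mult_ac)
    then show ?thesis using sum_christoffel1_christoffel[of X Y X Y G x] by simp
  qed
  finally show ?thesis .
qed

lemma dgform_christoffel1_form: "dgform G x u w z = christoffel1_form G x w u z + christoffel1_form G x z u w"
proof -
  have "dgform G x u w z = (\<Sum>m\<in>UNIV. \<Sum>k\<in>UNIV. \<Sum>j\<in>UNIV. w$m * u$j * z$k * christoffel1 G x m j k)
       + (\<Sum>m\<in>UNIV. \<Sum>k\<in>UNIV. \<Sum>j\<in>UNIV. w$m * u$j * z$k * christoffel1 G x k j m)"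
    unfolding dgform_expand dpartial_metric_christoffel1 by (simp add: algebra_simps sum.distrib)
  moreover have "(\<Sum>m\<in>UNIV. \<Sum>k\<in>UNIV. \<Sum>j\<in>UNIV. w$m * u$j * z$k * christoffel1 G x m j k) = christoffel1_form G x w u z"
    unfolding christoffel1_form_def by (rule sum_swap_inner)
  moreover have "(\<Sum>m\<in>UNIV. \<Sum>k\<in>UNIV. \<Sum>j\<in>UNIV. w$m * u$j * z$k * christoffel1 G x k j m) = christoffel1_form G x z u w"
  proof -
    have "(\<Sum>m\<in>UNIV. \<Sum>k\<in>UNIV. \<Sum>j\<in>UNIV. w$m * u$j * z$k * christoffel1 G x k j m)
        = (\<Sum>k\<in>UNIV. \<Sum>m\<in>UNIV. \<Sum>j\<in>UNIV. w$m * u$j * z$k * christoffel1 G x k j m)" by (rule sum.swap)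
    also have "\<dots> = (\<Sum>k\<in>UNIV. \<Sum>j\<in>UNIV. \<Sum>m\<in>UNIV. w$m * u$j * z$k * christoffel1 G x k j m)"
      by (rule sum.cong[OF refl], rule sum.swap)
    also have "\<dots> = christoffel1_form G x z u w" unfolding christoffel1_form_def by (simp add: mult_ac)
    finally show ?thesis .
  qed
  ultimately show ?thesis by simp
qed

lemma inverse_form_metric_translate:
  shows "inner (G x *v s + c) (matrix_inv (G x) *v (G x *v s' + c'))
    = gform G x s s' + inner s c' + inner s' c + inverse_form G x c c'"
proof -
  have dx: "det (G x) \<noteq> 0" using det_metric_nonzero S by blast
  have sym: "inner (G x *v s) t = inner s (G x *v t)" for t
  proof -
    have "transpose (G x) = G x" using metric_sym S by (simp add: transpose_def vec_eq_iff)
    then show ?thesis using inner_matrix_vector_transpose[of "G x" s t] by simp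
  qed
  have "matrix_inv (G x) *v (G x *v s' + c') = s' + matrix_inv (G x) *v c'"
    by (simp add: matrix_vector_right_distrib matrix_inv_mult_vector_cancel(1)[OF dx])
  then have "inner (G x *v s + c) (matrix_inv (G x) *v (G x *v s' + c'))
     = inner (G x *v s) s' + inner (G x *v s) (matrix_inv (G x) *v c') + inner c s' + inner c (matrix_inv (G x) *v c')"
    by (simp add: inner_add_left inner_add_right)
  also have "\<dots> = gform G x s s' + inner s c' + inner s' c + inverse_form G x c c'"
    unfolding sym gform_inner inverse_form_inner matrix_inv_mult_vector_cancel(2)[OF dx] by (simp add: inner_commute)
  finally show ?thesis .
qed

end

lemma has_derivative_gform_comp:
  fixes G :: "real^'n::finite \<Rightarrow> real^'n^'n" and \<phi> A B :: "real^'m::finite \<Rightarrow> real^'n"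
  assumes A: "(A has_derivative A') (at v)" and B: "(B has_derivative B') (at v)"
    and ph: "(\<phi> has_derivative \<phi>') (at v)"
    and Gd: "\<And>i j. (\<lambda>z. G z $ i $ j) differentiable (at (\<phi> v))"
  shows "((\<lambda>z. gform G (\<phi> z) (A z) (B z)) has_derivative
     (\<lambda>h. gform G (\<phi> v) (A' h) (B v) + gform G (\<phi> v) (A v) (B' h) + dgform G (\<phi> v) (\<phi>' h) (A v) (B v))) (at v)"
proof -
  have Gc: "((\<lambda>z. G (\<phi> z) $ i $ j) has_derivative (\<lambda>h. \<Sum>r\<in>UNIV. \<phi>' h $ r * dpartial r (\<lambda>y. G y $ i $ j) (\<phi> v))) (at v)" for i j
    using has_derivative_compose[OF ph has_derivative_dpartial[OF Gd]] by simp
  have "((\<lambda>z. gform G (\<phi> z) (A z) (B z)) has_derivative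
     (\<lambda>h. \<Sum>i\<in>UNIV. \<Sum>j\<in>UNIV. (A v $ i * G (\<phi> v) $ i $ j) * B' h $ j
        + (A v $ i * (\<Sum>r\<in>UNIV. \<phi>' h $ r * dpartial r (\<lambda>y. G y $ i $ j) (\<phi> v)) + A' h $ i * G (\<phi> v) $ i $ j) * B v $ j)) (at v)"
    unfolding gform_def
    by (intro has_derivative_sum has_derivative_mult has_derivative_vec_nth A B Gc)
  then show ?thesis
    by (rule has_derivative_eq_rhs)
       (simp add: fun_eq_iff gform_def dgform_def algebra_simps sum.distrib)
qed

lemma has_derivative_christoffel1_form_comp:
  fixes G :: "real^'n::finite \<Rightarrow> real^'n^'n" and \<phi> A B C :: "real^'m::finite \<Rightarrow> real^'n"
  assumes A: "(A has_derivative A') (at v)" and B: "(B has_derivative B') (at v)" and C: "(C has_derivative C') (at v)"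
    and ph: "(\<phi> has_derivative \<phi>') (at v)"
    and cd: "\<And>m j k. (\<lambda>y. christoffel1 G y m j k) differentiable (at (\<phi> v))"
  shows "((\<lambda>z. christoffel1_form G (\<phi> z) (A z) (B z) (C z)) has_derivative
     (\<lambda>h. christoffel1_form G (\<phi> v) (A' h) (B v) (C v) + christoffel1_form G (\<phi> v) (A v) (B' h) (C v) + christoffel1_form G (\<phi> v) (A v) (B v) (C' h)
        + (\<Sum>r\<in>UNIV. \<phi>' h $ r * dpartial r (\<lambda>y. christoffel1_form G y (A v) (B v) (C v)) (\<phi> v)))) (at v)"
proof -
  have cc: "((\<lambda>z. christoffel1 G (\<phi> z) m j k) has_derivative (\<lambda>h. \<Sum>r\<in>UNIV. \<phi>' h $ r * dpartial r (\<lambda>y. christoffel1 G y m j k) (\<phi> v))) (at v)" for m j k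
    using has_derivative_compose[OF ph has_derivative_dpartial[OF cd]] by simp
  have "((\<lambda>z. christoffel1_form G (\<phi> z) (A z) (B z) (C z)) has_derivative
     (\<lambda>h. \<Sum>m\<in>UNIV. \<Sum>j\<in>UNIV. \<Sum>k\<in>UNIV.
        A v $ m * B v $ j * C v $ k * (\<Sum>r\<in>UNIV. \<phi>' h $ r * dpartial r (\<lambda>y. christoffel1 G y m j k) (\<phi> v))
      + (A v $ m * B v $ j * C' h $ k + (A v $ m * B' h $ j + A' h $ m * B v $ j) * C v $ k) * christoffel1 G (\<phi> v) m j k)) (at v)"
    unfolding christoffel1_form_def
    by (intro has_derivative_sum has_derivative_mult has_derivative_vec_nth A B C cc)
  then show ?thesis
  proof (rule has_derivative_eq_rhs)
    show "(\<lambda>h. \<Sum>m\<in>UNIV. \<Sum>j\<in>UNIV. \<Sum>k\<in>UNIV.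
        A v $ m * B v $ j * C v $ k * (\<Sum>r\<in>UNIV. \<phi>' h $ r * dpartial r (\<lambda>y. christoffel1 G y m j k) (\<phi> v))
      + (A v $ m * B v $ j * C' h $ k + (A v $ m * B' h $ j + A' h $ m * B v $ j) * C v $ k) * christoffel1 G (\<phi> v) m j k) =
      (\<lambda>h. christoffel1_form G (\<phi> v) (A' h) (B v) (C v) + christoffel1_form G (\<phi> v) (A v) (B' h) (C v) + christoffel1_form G (\<phi> v) (A v) (B v) (C' h)
        + (\<Sum>r\<in>UNIV. \<phi>' h $ r * dpartial r (\<lambda>y. christoffel1_form G y (A v) (B v) (C v)) (\<phi> v)))"
    proof
      fix h
      have "(\<Sum>r\<in>UNIV. \<phi>' h $ r * dpartial r (\<lambda>y. christoffel1_form G y (A v) (B v) (C v)) (\<phi> v))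
          = (\<Sum>r\<in>UNIV. \<Sum>m\<in>UNIV. \<Sum>j\<in>UNIV. \<Sum>k\<in>UNIV. \<phi>' h $ r * (A v $ m * B v $ j * C v $ k * dpartial r (\<lambda>y. christoffel1 G y m j k) (\<phi> v)))"
        by (simp add: dpartial_christoffel1_form[OF cd] sum_distrib_left)
      also have "\<dots> = (\<Sum>m\<in>UNIV. \<Sum>j\<in>UNIV. \<Sum>k\<in>UNIV. \<Sum>r\<in>UNIV. \<phi>' h $ r * (A v $ m * B v $ j * C v $ k * dpartial r (\<lambda>y. christoffel1 G y m j k) (\<phi> v)))"
        by (rule sum_rotate4[symmetric])
      finally have e: "(\<Sum>r\<in>UNIV. \<phi>' h $ r * dpartial r (\<lambda>y. christoffel1_form G y (A v) (B v) (C v)) (\<phi> v))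
          = (\<Sum>m\<in>UNIV. \<Sum>j\<in>UNIV. \<Sum>k\<in>UNIV. A v $ m * B v $ j * C v $ k * (\<Sum>r\<in>UNIV. \<phi>' h $ r * dpartial r (\<lambda>y. christoffel1 G y m j k) (\<phi> v)))"
        by (simp add: sum_distrib_left mult_ac)
      show "(\<Sum>m\<in>UNIV. \<Sum>j\<in>UNIV. \<Sum>k\<in>UNIV.
        A v $ m * B v $ j * C v $ k * (\<Sum>r\<in>UNIV. \<phi>' h $ r * dpartial r (\<lambda>y. christoffel1 G y m j k) (\<phi> v))
      + (A v $ m * B v $ j * C' h $ k + (A v $ m * B' h $ j + A' h $ m * B v $ j) * C v $ k) * christoffel1 G (\<phi> v) m j k) =
      christoffel1_form G (\<phi> v) (A' h) (B v) (C v) + christoffel1_form G (\<phi> v) (A v) (B' h) (C v) + christoffel1_form G (\<phi> v) (A v) (B v) (C' h)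
        + (\<Sum>r\<in>UNIV. \<phi>' h $ r * dpartial r (\<lambda>y. christoffel1_form G y (A v) (B v) (C v)) (\<phi> v))"
        unfolding e unfolding christoffel1_form_def by (simp add: sum.distrib algebra_simps)
    qed
  qed
qed

section \<open>Homogeneous functions and their Hessian metric\<close>

lemma open_cone_scaleR: "open_cone U \<Longrightarrow> x \<in> U \<Longrightarrow> t > 0 \<Longrightarrow> t *\<^sub>R x \<in> U"
  by (simp add: open_cone_def)

lemma iter_partial_homogeneous:
  fixes f :: "real^'n::finite \<Rightarrow> real"
  assumes cone: "open_cone U" and smooth: "smooth_on U f"
    and homogeneous: "\<forall>x\<in>U. \<forall>t::real. t > 0 \<longrightarrow> f (t *\<^sub>R x) = t powr d * f x"
  shows "\<forall>x\<in>U. \<forall>t::real. t > 0 \<longrightarrow> iter_partial is f (t *\<^sub>R x) = t powr (d - length is) * iter_partial is f x"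
proof (induction "is")
  case Nil then show ?case using homogeneous by simp
next
  case (Cons i js)
  have open_U: "open U" using cone open_cone_def by blast
  show ?case
  proof (intro ballI allI impI)
    fix x :: "real^'n" and t :: real assume x: "x \<in> U" and t: "t > 0"
    define F where "F = iter_partial js f"
    define e where "e = d - length js"
    have Fd: "F differentiable (at y)" if "y \<in> U" for y unfolding F_def using smooth_on_differentiable[OF smooth open_U that] .
    have txU: "t *\<^sub>R x \<in> U" using open_cone_scaleR[OF cone x t] .
    have "dpartial i (\<lambda>z. F (t *\<^sub>R z)) x = dpartial i (\<lambda>z. t powr e * F z) x"
      by (rule dpartial_cong_open[OF open_U x]) (use Cons.IH t in \<open>simp add: F_def e_def\<close>)
    then have "t * dpartial i F (t *\<^sub>R x) = t powr e * dpartial i F x"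
      using dpartial_scaleR_arg[OF Fd[OF txU]] dpartial_cmult[OF Fd[OF x]] by simp
    then have "dpartial i F (t *\<^sub>R x) = t powr (e - 1) * dpartial i F x"
      using t by (simp add: powr_diff field_simps)
    moreover have "t powr (e - 1) = t powr (d - real (length (i # js)))" unfolding e_def by (simp add: algebra_simps)
    ultimately show "iter_partial (i # js) f (t *\<^sub>R x) = t powr (d - real (length (i # js))) * iter_partial (i # js) f x"
      unfolding F_def by simp
  qed
qed

lemma euler_iter_partial:
  fixes f :: "real^'n::finite \<Rightarrow> real"
  assumes cone: "open_cone U" and smooth: "smooth_on U f"
    and homogeneous: "\<forall>x\<in>U. \<forall>t::real. t > 0 \<longrightarrow> f (t *\<^sub>R x) = t powr d * f x"
    and x: "x \<in> U"
  shows "(\<Sum>m\<in>UNIV. x$m * dpartial m (iter_partial is f) x) = (d - length is) * iter_partial is f x"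
proof -
  define F where "F = iter_partial is f"
  define e where "e = d - length is"
  have open_U: "open U" using cone open_cone_def by blast
  have Fd: "F differentiable (at x)" unfolding F_def using smooth_on_differentiable[OF smooth open_U x] .
  have "((\<lambda>t. t *\<^sub>R x) has_derivative (\<lambda>s. s *\<^sub>R x)) (at (1::real))" by (auto intro!: derivative_eq_intros)
  moreover have Fd1: "F differentiable (at ((1::real) *\<^sub>R x))" using Fd by simp
  ultimately have "((\<lambda>t. F (t *\<^sub>R x)) has_derivative (\<lambda>s. \<Sum>k\<in>UNIV. (s *\<^sub>R x)$k * dpartial k F (1 *\<^sub>R x))) (at 1)"
    using has_derivative_compose has_derivative_dpartial by blast
  then have "((\<lambda>t. F (t *\<^sub>R x)) has_derivative (\<lambda>s. \<Sum>k\<in>UNIV. (s *\<^sub>R x)$k * dpartial k F x)) (at 1)" by simp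
  then have D1: "((\<lambda>t. F (t *\<^sub>R x)) has_real_derivative (\<Sum>k\<in>UNIV. x$k * dpartial k F x)) (at 1)"
    by (rule has_derivative_imp_has_field_derivative) (simp add: sum_distrib_left mult.assoc)
  have ev: "eventually (\<lambda>t. F (t *\<^sub>R x) = t powr e * F x) (nhds (1::real))"
  proof -
    have "eventually (\<lambda>t::real. t \<in> {0<..}) (nhds 1)" by (rule eventually_nhds_in_open) auto
    then show ?thesis
      by eventually_elim (use iter_partial_homogeneous[OF cone smooth homogeneous] x in \<open>simp add: F_def e_def\<close>)
  qed
  have "((\<lambda>t. t powr e * F x) has_real_derivative (e * 1 powr (e - 1) * F x)) (at 1)"
    by (intro derivative_eq_intros has_real_derivative_powr) auto
  then have D2: "((\<lambda>t. F (t *\<^sub>R x)) has_real_derivative (e * F x)) (at 1)"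
    using DERIV_cong_ev[OF refl ev refl] by simp
  from DERIV_unique[OF D1 D2] show ?thesis unfolding F_def e_def .
qed

locale hessian_cone =
  fixes U :: "(real^'n::finite) set" and f :: "real^'n \<Rightarrow> real" and d :: real
  assumes cone: "open_cone U" and smooth: "smooth_on U f" and d_gt_1: "d > 1"
    and homogeneous: "\<forall>x\<in>U. \<forall>t::real. t > 0 \<longrightarrow> f (t *\<^sub>R x) = t powr d * f x"
    and det_hessian_nonzero: "\<forall>x\<in>U. det (hessian f x) \<noteq> 0"
begin

abbreviation GU :: "real^'n \<Rightarrow> real^'n^'n" where "GU \<equiv> hess_metric d f"
definition \<kappa> :: real where "\<kappa> = - (1 / (d * (d - 1)))"

lemma open_U: "open U" using cone open_cone_def by blast

lemma kappa_nonzero: "\<kappa> \<noteq> 0" using d_gt_1 by (simp add: \<kappa>_def)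

lemma metric_entry: "GU y $ i $ j = \<kappa> * iter_partial [i, j] f y"
  by (simp add: hess_metric_def hessian_def \<kappa>_def)

lemma iter_partial_differentiable: "y \<in> U \<Longrightarrow> iter_partial is f differentiable (at y)"
  using smooth_on_differentiable[OF smooth open_U] by blast

lemma iter_partial_swap: "y \<in> U \<Longrightarrow> iter_partial (i # j # is) f y = iter_partial (j # i # is) f y"
proof -
  assume y: "y \<in> U"
  have "dpartial i (\<lambda>y. dpartial j (iter_partial is f) y) y = dpartial j (\<lambda>y. dpartial i (iter_partial is f) y) y"
    by (rule dpartial_commute[OF open_U y iter_partial_differentiable]) (use iter_partial_differentiable[OF y, of "j # is"] iter_partial_differentiable[OF y, of "i # is"] in auto)
  then show ?thesis by simp
qed

lemma metric_sym: "y \<in> U \<Longrightarrow> GU y $ m $ k = GU y $ k $ m"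
  unfolding metric_entry using iter_partial_swap[of y m k "[]"] by simp

lemma metric_differentiable: "y \<in> U \<Longrightarrow> (\<lambda>z. GU z $ m $ k) differentiable (at y)"
  unfolding metric_entry by (intro differentiable_mult differentiable_const iter_partial_differentiable)

lemma dpartial_metric: "y \<in> U \<Longrightarrow> dpartial j (\<lambda>z. GU z $ m $ k) y = \<kappa> * iter_partial [j, m, k] f y"
  unfolding metric_entry using dpartial_cmult[OF iter_partial_differentiable[of y "[m,k]"], of j \<kappa>] by simp

lemma dpartial_metric_differentiable: "x \<in> U \<Longrightarrow> (\<lambda>y. dpartial j (\<lambda>z. GU z $ m $ k) y) differentiable (at x)"
proof -
  assume x: "x \<in> U"
  have "(\<lambda>y. \<kappa> * iter_partial [j, m, k] f y) differentiable (at x)"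
    by (intro differentiable_mult differentiable_const iter_partial_differentiable x)
  then show ?thesis
    by (rule differentiable_cong_open[OF _ open_U x]) (simp add: dpartial_metric)
qed

lemma det_metric_nonzero: "y \<in> U \<Longrightarrow> det (GU y) \<noteq> 0"
proof -
  assume y: "y \<in> U"
  have "GU y = (\<chi> i. \<kappa> *s (hessian f y $ i))" by (simp add: vec_eq_iff hess_metric_def \<kappa>_def)
  then have "det (GU y) = \<kappa> ^ CARD('n) * det (hessian f y)" by (simp add: det_rows_mul)
  then show ?thesis using det_hessian_nonzero y kappa_nonzero by simp
qed

lemma local_metric_at: "x \<in> U \<Longrightarrow> local_metric GU U x"
  by unfold_locales (auto simp: open_U metric_differentiable metric_sym dpartial_metric_differentiable det_metric_nonzero)

lemma christoffel1_eq: "y \<in> U \<Longrightarrow> christoffel1 GU y m j k = \<kappa> / 2 * (iter_partial [j, m, k] f y + iter_partial [k, m, j] f y - iter_partial [m, j, k] f y)"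
  unfolding christoffel1_def by (simp add: dpartial_metric field_simps)

lemma iter_partial_scaleR: "y \<in> U \<Longrightarrow> t > 0 \<Longrightarrow> iter_partial is f (t *\<^sub>R y) = t powr (d - length is) * iter_partial is f y"
  using iter_partial_homogeneous[OF cone smooth homogeneous] by blast

lemma metric_scaleR: "y \<in> U \<Longrightarrow> t > 0 \<Longrightarrow> GU (t *\<^sub>R y) = t powr (d - 2) *\<^sub>R GU y"
  unfolding vec_eq_iff using iter_partial_scaleR[of y t "[_, _]"] by (simp add: metric_entry del: iter_partial.simps)

lemma dpartial_metric_scaleR: "y \<in> U \<Longrightarrow> t > 0 \<Longrightarrow>
    dpartial j (\<lambda>z. GU z $ m $ k) (t *\<^sub>R y) = t powr (d - 3) * dpartial j (\<lambda>z. GU z $ m $ k) y"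
  using iter_partial_scaleR[of y t "[j, m, k]"] open_cone_scaleR[OF cone, of y t] by (simp add: dpartial_metric del: iter_partial.simps)

lemma matrix_inv_metric_scaleR: "y \<in> U \<Longrightarrow> t > 0 \<Longrightarrow> matrix_inv (GU (t *\<^sub>R y)) = t powr (2 - d) *\<^sub>R matrix_inv (GU y)"
  using matrix_inv_scaleR[OF det_metric_nonzero, of y "t powr (d - 2)"]
  by (simp add: metric_scaleR powr_minus_divide[symmetric] powr_diff)

lemma christoffel_scaleR: "y \<in> U \<Longrightarrow> t > 0 \<Longrightarrow>
    christoffel GU (t *\<^sub>R y) l j k = t powr (-1) * christoffel GU y l j k"
proof -
  assume y: "y \<in> U" and t: "t > 0"
  have "christoffel GU (t *\<^sub>R y) l j k = (\<Sum>m\<in>UNIV. (t powr (2 - d) * matrix_inv (GU y) $ l $ m) *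
        (t powr (d - 3) * (dpartial j (\<lambda>z. GU z $ m $ k) y + dpartial k (\<lambda>z. GU z $ m $ j) y
         - dpartial m (\<lambda>z. GU z $ j $ k) y))) / 2"
    unfolding christoffel_def matrix_inv_metric_scaleR[OF y t] by (simp add: dpartial_metric_scaleR[OF y t] algebra_simps)
  also have "\<dots> = (t powr (2 - d) * t powr (d - 3)) * christoffel GU y l j k"
    unfolding christoffel_def by (simp add: sum_distrib_left algebra_simps sum_divide_distrib)
  also have "t powr (2 - d) * t powr (d - 3) = t powr (-1)" by (simp add: powr_add[symmetric])
  finally show ?thesis .
qed

lemma dpartial_christoffel_scaleR: "y \<in> U \<Longrightarrow> t > 0 \<Longrightarrow>
    dpartial i (\<lambda>z. christoffel GU z l j k) (t *\<^sub>R y) = t powr (-2) * dpartial i (\<lambda>z. christoffel GU z l j k) y"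
proof -
  assume y: "y \<in> U" and t: "t > 0"
  have ty: "t *\<^sub>R y \<in> U" using open_cone_scaleR[OF cone y t] .
  define c where "c = t powr (-1)"
  have "dpartial i (\<lambda>z. christoffel GU (t *\<^sub>R z) l j k) y = dpartial i (\<lambda>z. c * christoffel GU z l j k) y"
    by (rule dpartial_cong_open[OF open_U y]) (simp add: christoffel_scaleR t c_def)
  moreover have "dpartial i (\<lambda>z. christoffel GU (t *\<^sub>R z) l j k) y = t * dpartial i (\<lambda>z. christoffel GU z l j k) (t *\<^sub>R y)"
    by (rule dpartial_scaleR_arg[OF local_metric.christoffel_differentiable[OF local_metric_at[OF ty]]])
  moreover have "dpartial i (\<lambda>z. c * christoffel GU z l j k) y = c * dpartial i (\<lambda>z. christoffel GU z l j k) y"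
    by (rule dpartial_cmult[OF local_metric.christoffel_differentiable[OF local_metric_at[OF y]]])
  ultimately have "t * dpartial i (\<lambda>z. christoffel GU z l j k) (t *\<^sub>R y) = c * dpartial i (\<lambda>z. christoffel GU z l j k) y"
    by simp
  then have "dpartial i (\<lambda>z. christoffel GU z l j k) (t *\<^sub>R y) = (c / t) * dpartial i (\<lambda>z. christoffel GU z l j k) y"
    using t by (simp add: field_simps)
  moreover have "c / t = t powr (-2)" unfolding c_def using t by (simp add: powr_minus field_simps power2_eq_square)
  ultimately show ?thesis by simp
qed

lemma riemann_scaleR: "y \<in> U \<Longrightarrow> t > 0 \<Longrightarrow>
    riemann GU (t *\<^sub>R y) l i j k = t powr (-2) * riemann GU y l i j k"
proof -
  assume y: "y \<in> U" and t: "t > 0"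
  define c where "c = t powr (-2)"
  have e: "t powr (-1) * a * (t powr (-1) * b) = c * (a * b)" for a b
  proof -
    have "t powr (-1) * a * (t powr (-1) * b) = (t powr (-1) * t powr (-1)) * (a * b)" by (simp add: algebra_simps)
    also have "t powr (-1) * t powr (-1) = t powr (-2)" by (simp only: powr_add[symmetric]) simp
    finally show ?thesis unfolding c_def .
  qed
  have dc: "dpartial i (\<lambda>z. christoffel GU z l j k) (t *\<^sub>R y) = c * dpartial i (\<lambda>z. christoffel GU z l j k) y" for i l j k
    unfolding c_def by (rule dpartial_christoffel_scaleR[OF y t])
  show ?thesis unfolding riemann_def c_def[symmetric]
    by (simp only: dc christoffel_scaleR[OF y t] e)
       (simp add: sum_distrib_left right_diff_distrib distrib_left sum_subtractf)
qed

lemma sectional_curvature_scaleR: "y \<in> U \<Longrightarrow> t > 0 \<Longrightarrow>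
    sectional_curvature GU (t *\<^sub>R y) (t *\<^sub>R X) (t *\<^sub>R Y) = (1 / t powr d) * sectional_curvature GU y X Y"
proof -
  assume y: "y \<in> U" and t: "t > 0"
  have cv: "curv_vec GU (t *\<^sub>R y) (t *\<^sub>R X) (t *\<^sub>R Y) (t *\<^sub>R Y) = t *\<^sub>R curv_vec GU y X Y Y"
  proof -
    have tt: "t powr (-2) * (t * (t * t)) = t" using t by (simp add: powr_minus field_simps power2_eq_square)
    have key: "t powr (-2) * r * (t * a) * (t * b) * (t * c) = t * (r * a * b * c)" for r a b c :: real
    proof -
      have "t powr (-2) * r * (t * a) * (t * b) * (t * c) = (t powr (-2) * (t * (t * t))) * (r * a * b * c)"
        by (simp add: algebra_simps)
      then show ?thesis by (simp only: tt)
    qed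
    show ?thesis
      unfolding curv_vec_def vec_eq_iff
      by (simp only: riemann_scaleR[OF y t] vector_scaleR_component key sum_distrib_left vec_lambda_beta real_scaleR_def) simp
  qed
  have gf: "gform GU (t *\<^sub>R y) (t *\<^sub>R A) (t *\<^sub>R B) = t powr d * gform GU y A B" for A B
  proof -
    have tt: "t * (t * t powr (d - 2)) = t powr d" using t by (simp add: powr_diff power2_eq_square)
    have key: "t * a * (t powr (d - 2) * g) * (t * b) = t powr d * (a * g * b)" for a g b :: real
    proof -
      have "t * a * (t powr (d - 2) * g) * (t * b) = (t * (t * t powr (d - 2))) * (a * g * b)" by (simp add: algebra_simps)
      then show ?thesis by (simp only: tt)
    qed
    show ?thesis
      unfolding gform_def metric_scaleR[OF y t]
      by (simp only: vector_scaleR_component real_scaleR_def key sum_distrib_left) 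
  qed
  have "sectional_curvature GU (t *\<^sub>R y) (t *\<^sub>R X) (t *\<^sub>R Y)
      = (t powr d * gform GU y (curv_vec GU y X Y Y) X) /
        ((t powr d)\<^sup>2 * (gform GU y X X * gform GU y Y Y - (gform GU y X Y)\<^sup>2))"
    unfolding sectional_curvature_def cv gf by (simp add: algebra_simps power2_eq_square)
  also have "\<dots> = (1 / t powr d) * sectional_curvature GU y X Y"
    unfolding sectional_curvature_def using t by (simp add: power2_eq_square)
  finally show ?thesis .
qed

lemma kappa_mult_d_minus_1: "\<kappa> * (d - 1) = - (1 / d)"
  using d_gt_1 by (simp add: \<kappa>_def field_simps)

lemma position_metric_row: "x \<in> U \<Longrightarrow> (\<Sum>i\<in>UNIV. x$i * GU x $ i $ j) = - (1 / d) * dpartial j f x"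
proof -
  assume x: "x \<in> U"
  have "(\<Sum>i\<in>UNIV. x$i * GU x $ i $ j) = \<kappa> * (\<Sum>i\<in>UNIV. x$i * dpartial i (iter_partial [j] f) x)"
    by (simp add: metric_entry sum_distrib_left mult_ac)
  also have "\<dots> = \<kappa> * ((d - 1) * iter_partial [j] f x)"
    using euler_iter_partial[OF cone smooth homogeneous x, of "[j]"] by simp
  also have "\<dots> = - (1 / d) * dpartial j f x" using kappa_mult_d_minus_1 by (simp add: mult.assoc[symmetric])
  finally show ?thesis .
qed

lemma euler_identity: "x \<in> U \<Longrightarrow> (\<Sum>j\<in>UNIV. x$j * dpartial j f x) = d * f x"
  using euler_iter_partial[OF cone smooth homogeneous, of x "[]"] by simp

lemma gform_position: "x \<in> U \<Longrightarrow> gform GU x x x = - f x"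
proof -
  assume x: "x \<in> U"
  have "gform GU x x x = (\<Sum>j\<in>UNIV. (\<Sum>i\<in>UNIV. x$i * GU x $ i $ j) * x$j)"
    unfolding gform_def by (subst sum.swap) (simp add: sum_distrib_right)
  also have "\<dots> = - (1 / d) * (\<Sum>j\<in>UNIV. x$j * dpartial j f x)"
    by (simp add: position_metric_row[OF x] sum_distrib_left mult_ac)
  also have "\<dots> = - f x" using euler_identity[OF x] d_gt_1 by simp
  finally show ?thesis .
qed

lemma christoffel1_position: "x \<in> U \<Longrightarrow> (\<Sum>m\<in>UNIV. x$m * christoffel1 GU x m j k) = (d - 2) / 2 * GU x $ j $ k"
proof -
  assume x: "x \<in> U"
  have s1: "(\<Sum>m\<in>UNIV. x$m * iter_partial [m, j, k] f x) = (d - 2) * iter_partial [j, k] f x"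
    using euler_iter_partial[OF cone smooth homogeneous x, of "[j, k]"] by simp
  have s2: "(\<Sum>m\<in>UNIV. x$m * iter_partial [j, m, k] f x) = (d - 2) * iter_partial [j, k] f x"
    using s1 iter_partial_swap[OF x, of j _ "[k]"] by simp
  have s3: "(\<Sum>m\<in>UNIV. x$m * iter_partial [k, m, j] f x) = (d - 2) * iter_partial [j, k] f x"
  proof -
    have "(\<Sum>m\<in>UNIV. x$m * iter_partial [k, m, j] f x) = (\<Sum>m\<in>UNIV. x$m * iter_partial [m, k, j] f x)"
      using iter_partial_swap[OF x, of k _ "[j]"] by simp
    also have "\<dots> = (d - 2) * iter_partial [k, j] f x"
      using euler_iter_partial[OF cone smooth homogeneous x, of "[k, j]"] by simp
    also have "iter_partial [k, j] f x = iter_partial [j, k] f x" using iter_partial_swap[OF x, of k j "[]"] by simp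
    finally show ?thesis .
  qed
  have "(\<Sum>m\<in>UNIV. x$m * christoffel1 GU x m j k) = \<kappa> / 2 * ((\<Sum>m\<in>UNIV. x$m * iter_partial [j, m, k] f x)
        + (\<Sum>m\<in>UNIV. x$m * iter_partial [k, m, j] f x) - (\<Sum>m\<in>UNIV. x$m * iter_partial [m, j, k] f x))"
    by (simp add: christoffel1_eq[OF x] sum_distrib_left sum.distrib sum_subtractf algebra_simps del: iter_partial.simps)
  also have "\<dots> = (d - 2) / 2 * GU x $ j $ k"
    unfolding s1 s2 s3 metric_entry by (simp add: algebra_simps del: iter_partial.simps)
  finally show ?thesis .
qed

lemma christoffel1_form_position: "x \<in> U \<Longrightarrow> christoffel1_form GU x x u w = (d - 2) / 2 * gform GU x u w"
proof -
  assume x: "x \<in> U"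
  have "christoffel1_form GU x x u w = (\<Sum>m\<in>UNIV. \<Sum>j\<in>UNIV. \<Sum>k\<in>UNIV. u$j * w$k * (x$m * christoffel1 GU x m j k))"
    unfolding christoffel1_form_def by (simp add: mult_ac)
  also have "\<dots> = (\<Sum>j\<in>UNIV. \<Sum>k\<in>UNIV. \<Sum>m\<in>UNIV. u$j * w$k * (x$m * christoffel1 GU x m j k))"
    by (rule sum_rotate3[symmetric])
  also have "\<dots> = (\<Sum>j\<in>UNIV. \<Sum>k\<in>UNIV. u$j * w$k * ((d - 2) / 2 * GU x $ j $ k))"
    by (simp add: sum_distrib_left[symmetric] christoffel1_position[OF x])
  also have "\<dots> = (d - 2) / 2 * gform GU x u w"
    unfolding gform_def by (simp add: sum_distrib_left mult_ac)
  finally show ?thesis .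
qed

end

section \<open>The level hypersurface\<close>

locale level_hypersurface = hessian_cone U f d for U :: "(real^'n::finite) set" and f d +
  fixes V :: "(real^'m::finite) set" and \<phi> :: "real^'m \<Rightarrow> real^'n" and p :: "real^'m"
  assumes card_eq: "CARD('n) = CARD('m) + 1" and param: "local_param (level_set U f) V \<phi>" and p_in_V: "p \<in> V"
begin

abbreviation gM :: "real^'m \<Rightarrow> real^'m^'m" where "gM \<equiv> pullback_metric GU \<phi>"
abbreviation x0 :: "real^'n" where "x0 \<equiv> \<phi> p"

lemma open_V: "open V" using param local_param_def by blast
lemma phi_in_U: "v \<in> V \<Longrightarrow> \<phi> v \<in> U" using param unfolding local_param_def level_set_def by blast
lemma f_phi: "v \<in> V \<Longrightarrow> f (\<phi> v) = 1" using param unfolding local_param_def level_set_def by blast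
lemma iter_partial_phi_differentiable: "v \<in> V \<Longrightarrow> iter_partial is (\<lambda>z. \<phi> z $ i) differentiable (at v)"
  using param unfolding local_param_def using smooth_on_differentiable[OF _ open_V] by blast
lemma phi_differentiable: "v \<in> V \<Longrightarrow> (\<lambda>z. \<phi> z $ i) differentiable (at v)"
  using iter_partial_phi_differentiable[of v "[]"] by simp
lemma inj_derivative_phi: "v \<in> V \<Longrightarrow> inj (frechet_derivative \<phi> (at v))"
  using param unfolding local_param_def by blast

lemma x0_in_U: "x0 \<in> U" using phi_in_U[OF p_in_V] .

definition dphi :: "'m \<Rightarrow> 'n \<Rightarrow> real^'m \<Rightarrow> real" where
  "dphi a i v = dpartial a (\<lambda>z. \<phi> z $ i) v"
definition dphi_col :: "'m \<Rightarrow> real^'m \<Rightarrow> real^'n" where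
  "dphi_col a v = (\<chi> i. dphi a i v)"
definition jac :: "real^'m \<Rightarrow> real^'m^'n" where
  "jac v = (\<chi> i a. dphi a i v)"
definition ddphi :: "'m \<Rightarrow> 'm \<Rightarrow> 'n \<Rightarrow> real^'m \<Rightarrow> real" where
  "ddphi a b i v = dpartial a (\<lambda>z. dphi b i z) v"
definition d2phi :: "real^'m \<Rightarrow> real^'m \<Rightarrow> real^'m \<Rightarrow> real^'n" where
  "d2phi v u w = (\<chi> i. \<Sum>a\<in>UNIV. \<Sum>b\<in>UNIV. u$a * w$b * ddphi a b i v)"
definition d3phi :: "real^'m \<Rightarrow> real^'m \<Rightarrow> real^'m \<Rightarrow> real^'m \<Rightarrow> real^'n" where
  "d3phi v x u w = (\<chi> i. \<Sum>c\<in>UNIV. \<Sum>a\<in>UNIV. \<Sum>b\<in>UNIV. x$c * u$a * w$b * dpartial c (\<lambda>z. ddphi a b i z) v)"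

lemma dphi_differentiable: "v \<in> V \<Longrightarrow> (\<lambda>z. dphi a i z) differentiable (at v)"
  using iter_partial_phi_differentiable[of v "[a]"] by (simp add: dphi_def[abs_def])
lemma ddphi_differentiable: "v \<in> V \<Longrightarrow> (\<lambda>z. ddphi a b i z) differentiable (at v)"
  using iter_partial_phi_differentiable[of v "[a, b]"] by (simp add: ddphi_def[abs_def] dphi_def[abs_def])

lemma has_derivative_phi: "v \<in> V \<Longrightarrow> (\<phi> has_derivative (\<lambda>w. jac v *v w)) (at v)"
proof -
  assume v: "v \<in> V"
  have "(\<lambda>w. jac v *v w) = (\<lambda>w. \<chi> r. \<Sum>k\<in>UNIV. w$k * dpartial k (\<lambda>z. \<phi> z $ r) v)"
    by (auto simp: jac_def dphi_def matrix_vector_mult_def vec_eq_iff mult.commute)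
  then show ?thesis using has_derivative_vec_dpartial[of \<phi> v] phi_differentiable[OF v] by simp
qed

lemma frechet_derivative_phi: "v \<in> V \<Longrightarrow> frechet_derivative \<phi> (at v) = (\<lambda>w. jac v *v w)"
  by (rule frechet_derivative_at[OF has_derivative_phi, symmetric])

lemma inj_jac: "v \<in> V \<Longrightarrow> inj ((*v) (jac v))"
proof -
  assume v: "v \<in> V"
  show ?thesis using inj_derivative_phi[OF v] unfolding frechet_derivative_phi[OF v] by simp
qed

lemma jac_axis: "jac v *v axis a 1 = dphi_col a v"
  by (simp add: jac_def dphi_col_def matrix_vector_mult_def vec_eq_iff sum_axis_mult mult.commute)

lemma pullback_metric_entry: "v \<in> V \<Longrightarrow> gM v $ a $ b = gform GU (\<phi> v) (dphi_col a v) (dphi_col b v)"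
  by (simp add: pullback_metric_def frechet_derivative_phi jac_axis)

lemma ddphi_sym: "v \<in> V \<Longrightarrow> ddphi a b i v = ddphi b a i v"
  unfolding ddphi_def dphi_def
  by (rule dpartial_commute[OF open_V _ phi_differentiable]) (auto intro: dphi_differentiable[unfolded dphi_def])

lemma pullback_metric_eq: "v \<in> V \<Longrightarrow> gM v = transpose (jac v) ** GU (\<phi> v) ** jac v"
proof -
  assume v: "v \<in> V"
  have "(transpose (jac v) ** GU (\<phi> v) ** jac v) $ a $ b = gM v $ a $ b" for a b
  proof -
    have "(transpose (jac v) ** GU (\<phi> v) ** jac v) $ a $ b = (\<Sum>k\<in>UNIV. (\<Sum>i\<in>UNIV. dphi a i v * GU (\<phi> v) $ i $ k) * dphi b k v)"
      by (simp add: matrix_matrix_mult_def transpose_def jac_def)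
    also have "\<dots> = (\<Sum>k\<in>UNIV. \<Sum>i\<in>UNIV. dphi a i v * GU (\<phi> v) $ i $ k * dphi b k v)" by (simp add: sum_distrib_right)
    also have "\<dots> = (\<Sum>i\<in>UNIV. \<Sum>k\<in>UNIV. dphi a i v * GU (\<phi> v) $ i $ k * dphi b k v)" by (rule sum.swap)
    also have "\<dots> = gM v $ a $ b" by (simp add: pullback_metric_entry[OF v] gform_def dphi_col_def)
    finally show ?thesis .
  qed
  then show ?thesis by (simp add: vec_eq_iff)
qed

lemma f_differentiable_phi: "v \<in> V \<Longrightarrow> f differentiable (at (\<phi> v))"
  using iter_partial_differentiable[OF phi_in_U, of v "[]"] by simp

lemma df_dphi_eq_0: "v \<in> V \<Longrightarrow> (\<Sum>j\<in>UNIV. dpartial j f (\<phi> v) * dphi a j v) = 0"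
proof -
  assume v: "v \<in> V"
  have "dpartial a (\<lambda>z. f (\<phi> z)) v = dpartial a (\<lambda>z. 1) v"
    by (rule dpartial_cong_open[OF open_V v]) (simp add: f_phi)
  then show ?thesis using dpartial_comp[OF f_differentiable_phi[OF v] phi_differentiable[OF v]] by (simp add: dpartial_const dphi_def)
qed

lemma second_derivative_level: "v \<in> V \<Longrightarrow>
   (\<Sum>j\<in>UNIV. (\<Sum>r\<in>UNIV. iter_partial [r, j] f (\<phi> v) * dphi a r v) * dphi b j v + dpartial j f (\<phi> v) * ddphi a b j v) = 0"
proof -
  assume v: "v \<in> V"
  have Hd: "(\<lambda>y. dpartial j f y) differentiable (at (\<phi> v))" for j
    using iter_partial_differentiable[OF phi_in_U[OF v], of "[j]"] by simp
  have cd: "(\<lambda>z. dpartial j f (\<phi> z)) differentiable (at v)" for j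
    by (rule differentiable_compose[where f="dpartial j f" and g=\<phi>, OF Hd]) (rule differentiableI[OF has_derivative_phi[OF v]])
  have "dpartial a (\<lambda>z. \<Sum>j\<in>UNIV. dpartial j f (\<phi> z) * dphi b j z) v = dpartial a (\<lambda>z. 0) v"
    by (rule dpartial_cong_open[OF open_V v]) (simp add: df_dphi_eq_0)
  then have "(\<Sum>j\<in>UNIV. dpartial a (\<lambda>z. dpartial j f (\<phi> z) * dphi b j z) v) = 0"
    by (subst (asm) dpartial_sum) (auto simp: dpartial_const intro!: differentiable_mult cd dphi_differentiable v)
  moreover have "dpartial a (\<lambda>z. dpartial j f (\<phi> z) * dphi b j z) v
     = (\<Sum>r\<in>UNIV. iter_partial [r, j] f (\<phi> v) * dphi a r v) * dphi b j v + dpartial j f (\<phi> v) * ddphi a b j v" for j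
  proof -
    have "dpartial a (\<lambda>z. dpartial j f (\<phi> z)) v = (\<Sum>r\<in>UNIV. iter_partial [r, j] f (\<phi> v) * dphi a r v)"
      using dpartial_comp[OF Hd phi_differentiable[OF v], of a] by (simp add: dphi_def)
    then show ?thesis using dpartial_mult[OF cd dphi_differentiable[OF v], of a] by (simp add: ddphi_def)
  qed
  ultimately show ?thesis by simp
qed

lemma metric_symmetric_matrix: "y \<in> U \<Longrightarrow> transpose (GU y) = GU y"
  using metric_sym by (simp add: transpose_def vec_eq_iff)

lemma position_orthogonal_tangent: "v \<in> V \<Longrightarrow> transpose (jac v) *v (GU (\<phi> v) *v \<phi> v) = 0"
proof -
  assume v: "v \<in> V"
  have x: "\<phi> v \<in> U" using phi_in_U[OF v] .
  have "(GU (\<phi> v) *v \<phi> v) $ i = - (1 / d) * dpartial i f (\<phi> v)" for i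
  proof -
    have "(GU (\<phi> v) *v \<phi> v) $ i = (\<Sum>j\<in>UNIV. \<phi> v $ j * GU (\<phi> v) $ j $ i)"
      by (simp add: matrix_vector_mult_def metric_sym[OF x, of i] mult.commute)
    then show ?thesis using position_metric_row[OF x] by simp
  qed
  then have "(transpose (jac v) *v (GU (\<phi> v) *v \<phi> v)) $ a
      = - (1 / d) * (\<Sum>i\<in>UNIV. dpartial i f (\<phi> v) * dphi a i v)" for a
    by (simp add: matrix_vector_mult_def transpose_def jac_def sum_distrib_left mult_ac)
  then show ?thesis using df_dphi_eq_0[OF v] by (simp add: vec_eq_iff)
qed

lemma position_gform_minus_one: "v \<in> V \<Longrightarrow> inner (\<phi> v) (GU (\<phi> v) *v \<phi> v) = -1"
proof -
  assume v: "v \<in> V"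
  have "inner (\<phi> v) (GU (\<phi> v) *v \<phi> v) = gform GU (\<phi> v) (\<phi> v) (\<phi> v)"
    by (simp add: inner_vec_def gform_def matrix_vector_mult_def sum_distrib_left mult_ac)
  then show ?thesis using gform_position[OF phi_in_U[OF v]] f_phi[OF v] by simp
qed

lemma det_pullback_metric_nonzero: "v \<in> V \<Longrightarrow> det (gM v) \<noteq> 0"
  using det_restricted_form_nonzero[OF card_eq det_metric_nonzero metric_symmetric_matrix inj_jac
      position_orthogonal_tangent position_gform_minus_one, OF phi_in_U phi_in_U]
  by (simp add: pullback_metric_eq)

lemma inner_matrix_inv_metric_split:
  "v \<in> V \<Longrightarrow> inner s (matrix_inv (GU (\<phi> v)) *v t)
     = inner (transpose (jac v) *v s) (matrix_inv (gM v) *v (transpose (jac v) *v t))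
       - inner s (\<phi> v) * inner t (\<phi> v)"
  using inner_matrix_inv_split[OF card_eq det_metric_nonzero metric_symmetric_matrix inj_jac
      position_orthogonal_tangent position_gform_minus_one, OF phi_in_U phi_in_U]
  by (simp add: pullback_metric_eq)

definition ddphi_col :: "'m \<Rightarrow> 'm \<Rightarrow> real^'m \<Rightarrow> real^'n" where
  "ddphi_col c a v = (\<chi> i. ddphi c a i v)"

lemma has_derivative_dphi_col: "v \<in> V \<Longrightarrow> ((\<lambda>z. dphi_col a z) has_derivative (\<lambda>h. \<chi> i. \<Sum>c\<in>UNIV. h$c * ddphi c a i v)) (at v)"
  by (rule has_derivative_vec_componentwise) (simp add: dphi_col_def ddphi_def has_derivative_dpartial dphi_differentiable)

lemma has_derivative_ddphi_col: "v \<in> V \<Longrightarrow> ((\<lambda>z. ddphi_col a b z) has_derivative (\<lambda>h. \<chi> i. \<Sum>c\<in>UNIV. h$c * dpartial c (\<lambda>z. ddphi a b i z) v)) (at v)"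
  by (rule has_derivative_vec_componentwise) (simp add: ddphi_col_def has_derivative_dpartial ddphi_differentiable)

lemma metric_differentiable_phi: "v \<in> V \<Longrightarrow> (\<lambda>z. GU z $ i $ j) differentiable (at (\<phi> v))"
  using metric_differentiable[OF phi_in_U] by blast

lemma ddphi_col_axis: "(\<chi> i. \<Sum>c\<in>UNIV. axis e 1 $ c * ddphi c a i v) = ddphi_col e a v"
  by (simp add: sum_axis_mult ddphi_col_def)

lemma has_derivative_pullback_entry: "v \<in> V \<Longrightarrow> ((\<lambda>z. gform GU (\<phi> z) (dphi_col a z) (dphi_col b z)) has_derivative
   (\<lambda>h. gform GU (\<phi> v) (\<chi> i. \<Sum>c\<in>UNIV. h$c * ddphi c a i v) (dphi_col b v) + gform GU (\<phi> v) (dphi_col a v) (\<chi> i. \<Sum>c\<in>UNIV. h$c * ddphi c b i v)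
      + dgform GU (\<phi> v) (jac v *v h) (dphi_col a v) (dphi_col b v))) (at v)"
  by (rule has_derivative_gform_comp[OF has_derivative_dphi_col has_derivative_dphi_col has_derivative_phi metric_differentiable_phi])

lemma dpartial_pullback_metric: "v \<in> V \<Longrightarrow> dpartial c (\<lambda>z. gM z $ a $ b) v
   = gform GU (\<phi> v) (ddphi_col c a v) (dphi_col b v) + gform GU (\<phi> v) (dphi_col a v) (ddphi_col c b v) + dgform GU (\<phi> v) (dphi_col c v) (dphi_col a v) (dphi_col b v)"
proof -
  assume v: "v \<in> V"
  have "dpartial c (\<lambda>z. gM z $ a $ b) v = dpartial c (\<lambda>z. gform GU (\<phi> z) (dphi_col a z) (dphi_col b z)) v"
    by (rule dpartial_cong_open[OF open_V v]) (simp add: pullback_metric_entry)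
  also have "\<dots> = gform GU (\<phi> v) (ddphi_col c a v) (dphi_col b v) + gform GU (\<phi> v) (dphi_col a v) (ddphi_col c b v) + dgform GU (\<phi> v) (dphi_col c v) (dphi_col a v) (dphi_col b v)"
    using dpartial_eq_derivative[OF has_derivative_pullback_entry[OF v]] by (simp add: ddphi_col_axis jac_axis)
  finally show ?thesis .
qed

lemma pullback_metric_differentiable: "y \<in> V \<Longrightarrow> (\<lambda>z. gM z $ a $ b) differentiable (at y)"
proof -
  assume y: "y \<in> V"
  show ?thesis
    by (rule differentiable_cong_open[OF differentiableI[OF has_derivative_pullback_entry[OF y]] open_V y]) (simp add: pullback_metric_entry)
qed

lemma dpartial_metric_phi_differentiable: "v \<in> V \<Longrightarrow> (\<lambda>y. dpartial r (\<lambda>z. GU z $ i $ j) (\<phi> y)) differentiable (at v)"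
proof -
  assume v: "v \<in> V"
  show ?thesis
    by (rule differentiable_compose[where f="\<lambda>y. dpartial r (\<lambda>z. GU z $ i $ j) y" and g=\<phi>, OF dpartial_metric_differentiable[OF phi_in_U[OF v]]])
       (rule differentiableI[OF has_derivative_phi[OF v]])
qed

lemma dphi_col_nth_differentiable: "v \<in> V \<Longrightarrow> (\<lambda>z. dphi_col a z $ i) differentiable (at v)"
  by (simp add: dphi_col_def dphi_differentiable)

lemma dpartial_pullback_metric_differentiable: "(\<lambda>y. dpartial c (\<lambda>z. gM z $ a $ b) y) differentiable (at p)"
proof -
  have d1: "(\<lambda>y. gform GU (\<phi> y) (ddphi_col c a y) (dphi_col b y)) differentiable (at p)"
    by (rule differentiableI[OF has_derivative_gform_comp[OF has_derivative_ddphi_col[OF p_in_V] has_derivative_dphi_col[OF p_in_V] has_derivative_phi[OF p_in_V] metric_differentiable_phi[OF p_in_V]]])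
  have d2: "(\<lambda>y. gform GU (\<phi> y) (dphi_col a y) (ddphi_col c b y)) differentiable (at p)"
    by (rule differentiableI[OF has_derivative_gform_comp[OF has_derivative_dphi_col[OF p_in_V] has_derivative_ddphi_col[OF p_in_V] has_derivative_phi[OF p_in_V] metric_differentiable_phi[OF p_in_V]]])
  have d3: "(\<lambda>y. dgform GU (\<phi> y) (dphi_col c y) (dphi_col a y) (dphi_col b y)) differentiable (at p)"
    unfolding dgform_def
    by (intro differentiable_sum ballI differentiable_mult dphi_col_nth_differentiable dpartial_metric_phi_differentiable p_in_V) auto
  have "(\<lambda>y. gform GU (\<phi> y) (ddphi_col c a y) (dphi_col b y) + gform GU (\<phi> y) (dphi_col a y) (ddphi_col c b y) + dgform GU (\<phi> y) (dphi_col c y) (dphi_col a y) (dphi_col b y))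
     differentiable (at p)" using d1 d2 d3 by simp
  then show ?thesis
    by (rule differentiable_cong_open[OF _ open_V p_in_V]) (simp add: dpartial_pullback_metric)
qed

lemma pullback_metric_sym: "y \<in> V \<Longrightarrow> gM y $ a $ b = gM y $ b $ a"
proof -
  assume y: "y \<in> V"
  have "gform GU (\<phi> y) (dphi_col a y) (dphi_col b y) = gform GU (\<phi> y) (dphi_col b y) (dphi_col a y)"
    by (rule gform_sym) (rule metric_sym[OF phi_in_U[OF y]])
  then show ?thesis by (simp add: pullback_metric_entry y)
qed

lemma local_metric_pullback: "local_metric gM V p"
  by unfold_locales (auto simp: open_V p_in_V pullback_metric_differentiable pullback_metric_sym dpartial_pullback_metric_differentiable det_pullback_metric_nonzero)

lemma ddphi_col_sym: "v \<in> V \<Longrightarrow> ddphi_col a b v = ddphi_col b a v"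
  by (simp add: ddphi_col_def vec_eq_iff ddphi_sym)

lemma christoffel1_pullback: "v \<in> V \<Longrightarrow> christoffel1 gM v e a b = gform GU (\<phi> v) (dphi_col e v) (ddphi_col a b v) + christoffel1_form GU (\<phi> v) (dphi_col e v) (dphi_col a v) (dphi_col b v)"
proof -
  assume v: "v \<in> V"
  note gs = gform_sym[of GU "\<phi> v", OF metric_sym[OF phi_in_U[OF v]]]
  show ?thesis
    unfolding christoffel1_def dpartial_pullback_metric[OF v] christoffel1_form_dgform[of GU "\<phi> v" "dphi_col e v"]
    using ddphi_col_sym[OF v, of a e] ddphi_col_sym[OF v, of b e] ddphi_col_sym[OF v, of b a] gs[of "ddphi_col b e v" "dphi_col a v"]
      gs[of "ddphi_col e b v" "dphi_col a v"]
    by (simp add: field_simps)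
qed

lemma jac_mult_vector: "jac v *v w = (\<chi> i. \<Sum>e\<in>UNIV. w$e * dphi_col e v $ i)"
  by (simp add: jac_def dphi_col_def matrix_vector_mult_def vec_eq_iff mult.commute)

lemma d2phi_eq: "d2phi v u z = (\<chi> i. \<Sum>a\<in>UNIV. u$a * (\<chi> i. \<Sum>b\<in>UNIV. z$b * ddphi_col a b v $ i) $ i)"
  by (simp add: d2phi_def ddphi_col_def vec_eq_iff sum_distrib_left mult_ac)

lemma christoffel1_form_pullback: "v \<in> V \<Longrightarrow> christoffel1_form gM v w u z = gform GU (\<phi> v) (jac v *v w) (d2phi v u z) + christoffel1_form GU (\<phi> v) (jac v *v w) (jac v *v u) (jac v *v z)"
proof -
  assume v: "v \<in> V"
  have "christoffel1_form gM v w u z = (\<Sum>e\<in>UNIV. w$e * (\<Sum>a\<in>UNIV. u$a * (\<Sum>b\<in>UNIV. z$b *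
      (gform GU (\<phi> v) (dphi_col e v) (ddphi_col a b v) + christoffel1_form GU (\<phi> v) (dphi_col e v) (dphi_col a v) (dphi_col b v)))))"
    unfolding christoffel1_form_def christoffel1_pullback[OF v] by (simp add: sum_distrib_left mult_ac)
  also have "\<dots> = gform GU (\<phi> v) (jac v *v w) (d2phi v u z) + christoffel1_form GU (\<phi> v) (jac v *v w) (jac v *v u) (jac v *v z)"
    unfolding jac_mult_vector d2phi_eq
    unfolding gform_lin_left christoffel1_form_lin1
    unfolding gform_lin_right christoffel1_form_lin2
    unfolding christoffel1_form_lin3
    by (simp add: distrib_left sum.distrib)
  finally show ?thesis .
qed

lemma column_jac: "column l (jac v) = dphi_col l v"
  by (simp add: column_def jac_def dphi_col_def vec_eq_iff)

lemma christoffel1_vec_pullback: "v \<in> V \<Longrightarrow> christoffel1_vec gM v u w = transpose (jac v) *v (GU (\<phi> v) *v d2phi v u w + christoffel1_vec GU (\<phi> v) (jac v *v u) (jac v *v w))"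
proof -
  assume v: "v \<in> V"
  show ?thesis unfolding vec_eq_iff
  proof
    fix l
    show "christoffel1_vec gM v u w $ l = (transpose (jac v) *v (GU (\<phi> v) *v d2phi v u w + christoffel1_vec GU (\<phi> v) (jac v *v u) (jac v *v w))) $ l"
      unfolding christoffel1_vec_nth unfolding christoffel1_form_pullback[OF v] unfolding transpose_mult_vector_nth column_jac jac_axis gform_inner christoffel1_form_inner
      by (simp add: inner_add_right)
  qed
qed

lemma has_derivative_jac_mult: "v \<in> V \<Longrightarrow> ((\<lambda>y. jac y *v w) has_derivative (\<lambda>h. d2phi v h w)) (at v)"
proof -
  assume v: "v \<in> V"
  show ?thesis
  proof (rule has_derivative_vec_componentwise)
    fix i
    have "((\<lambda>z. \<Sum>b\<in>UNIV. dphi b i z * w$b) has_derivative (\<lambda>h. \<Sum>b\<in>UNIV. (\<Sum>c\<in>UNIV. h$c * ddphi c b i v) * w$b)) (at v)"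
      by (intro has_derivative_sum has_derivative_mult_left)
         (simp add: ddphi_def has_derivative_dpartial dphi_differentiable[OF v])
    moreover have "(\<lambda>h. \<Sum>b\<in>UNIV. (\<Sum>c\<in>UNIV. h$c * ddphi c b i v) * w$b) = (\<lambda>h. d2phi v h w $ i)"
    proof
      fix h
      have "(\<Sum>b\<in>UNIV. (\<Sum>c\<in>UNIV. h$c * ddphi c b i v) * w$b) = (\<Sum>b\<in>UNIV. \<Sum>c\<in>UNIV. h$c * w$b * ddphi c b i v)"
        by (simp add: sum_distrib_right sum_distrib_left mult_ac)
      also have "\<dots> = (\<Sum>c\<in>UNIV. \<Sum>b\<in>UNIV. h$c * w$b * ddphi c b i v)" by (rule sum.swap)
      finally show "(\<Sum>b\<in>UNIV. (\<Sum>c\<in>UNIV. h$c * ddphi c b i v) * w$b) = d2phi v h w $ i" by (simp add: d2phi_def)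
    qed
    ultimately show "((\<lambda>z. (jac z *v w) $ i) has_derivative (\<lambda>h. d2phi v h w $ i)) (at v)"
      by (simp add: jac_def matrix_vector_mult_def)
  qed
qed

lemma has_derivative_d2phi: "v \<in> V \<Longrightarrow> ((\<lambda>y. d2phi y u w) has_derivative (\<lambda>h. d3phi v h u w)) (at v)"
proof -
  assume v: "v \<in> V"
  show ?thesis
  proof (rule has_derivative_vec_componentwise)
    fix i
    have "((\<lambda>z. \<Sum>a\<in>UNIV. \<Sum>b\<in>UNIV. u$a * w$b * ddphi a b i z) has_derivative
        (\<lambda>h. \<Sum>a\<in>UNIV. \<Sum>b\<in>UNIV. u$a * w$b * (\<Sum>c\<in>UNIV. h$c * dpartial c (\<lambda>z. ddphi a b i z) v))) (at v)"
      by (intro has_derivative_sum has_derivative_mult_right has_derivative_dpartial ddphi_differentiable[OF v])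
    moreover have "(\<lambda>h. \<Sum>a\<in>UNIV. \<Sum>b\<in>UNIV. u$a * w$b * (\<Sum>c\<in>UNIV. h$c * dpartial c (\<lambda>z. ddphi a b i z) v)) = (\<lambda>h. d3phi v h u w $ i)"
    proof
      fix h
      have "(\<Sum>a\<in>UNIV. \<Sum>b\<in>UNIV. u$a * w$b * (\<Sum>c\<in>UNIV. h$c * dpartial c (\<lambda>z. ddphi a b i z) v))
          = (\<Sum>a\<in>UNIV. \<Sum>b\<in>UNIV. \<Sum>c\<in>UNIV. h$c * u$a * w$b * dpartial c (\<lambda>z. ddphi a b i z) v)"
        by (simp add: sum_distrib_left mult_ac)
      also have "\<dots> = (\<Sum>c\<in>UNIV. \<Sum>a\<in>UNIV. \<Sum>b\<in>UNIV. h$c * u$a * w$b * dpartial c (\<lambda>z. ddphi a b i z) v)" by (rule sum_rotate3)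
      finally show "(\<Sum>a\<in>UNIV. \<Sum>b\<in>UNIV. u$a * w$b * (\<Sum>c\<in>UNIV. h$c * dpartial c (\<lambda>z. ddphi a b i z) v)) = d3phi v h u w $ i"
        by (simp add: d3phi_def)
    qed
    ultimately show "((\<lambda>z. d2phi z u w $ i) has_derivative (\<lambda>h. d3phi v h u w $ i)) (at v)"
      by (simp add: d2phi_def)
  qed
qed

lemma christoffel1_differentiable_phi: "v \<in> V \<Longrightarrow> (\<lambda>y. christoffel1 GU y m j k) differentiable (at (\<phi> v))"
  using local_metric.christoffel1_differentiable[OF local_metric_at[OF phi_in_U]] by blast

definition dchristoffel1_pullback :: "real^'m \<Rightarrow> real^'m \<Rightarrow> real^'m \<Rightarrow> real^'m \<Rightarrow> real" where
  "dchristoffel1_pullback x w u z = gform GU (\<phi> p) (d2phi p x w) (d2phi p u z) + gform GU (\<phi> p) (jac p *v w) (d3phi p x u z)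
   + dgform GU (\<phi> p) (jac p *v x) (jac p *v w) (d2phi p u z)
   + christoffel1_form GU (\<phi> p) (d2phi p x w) (jac p *v u) (jac p *v z) + christoffel1_form GU (\<phi> p) (jac p *v w) (d2phi p x u) (jac p *v z)
   + christoffel1_form GU (\<phi> p) (jac p *v w) (jac p *v u) (d2phi p x z)
   + (\<Sum>r\<in>UNIV. (jac p *v x) $ r * dpartial r (\<lambda>y. christoffel1_form GU y (jac p *v w) (jac p *v u) (jac p *v z)) (\<phi> p))"

lemma dchristoffel1_pullback: "(\<Sum>c\<in>UNIV. x$c * dpartial c (\<lambda>y. christoffel1_form gM y w u z) p) = dchristoffel1_pullback x w u z"
proof -
  have hd: "((\<lambda>y. gform GU (\<phi> y) (jac y *v w) (d2phi y u z) + christoffel1_form GU (\<phi> y) (jac y *v w) (jac y *v u) (jac y *v z)) has_derivative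
     (\<lambda>h. (gform GU (\<phi> p) (d2phi p h w) (d2phi p u z) + gform GU (\<phi> p) (jac p *v w) (d3phi p h u z)
       + dgform GU (\<phi> p) (jac p *v h) (jac p *v w) (d2phi p u z))
      + (christoffel1_form GU (\<phi> p) (d2phi p h w) (jac p *v u) (jac p *v z) + christoffel1_form GU (\<phi> p) (jac p *v w) (d2phi p h u) (jac p *v z)
       + christoffel1_form GU (\<phi> p) (jac p *v w) (jac p *v u) (d2phi p h z)
       + (\<Sum>r\<in>UNIV. (jac p *v h) $ r * dpartial r (\<lambda>y. christoffel1_form GU y (jac p *v w) (jac p *v u) (jac p *v z)) (\<phi> p))))) (at p)"
    by (intro has_derivative_add has_derivative_gform_comp[OF has_derivative_jac_mult[OF p_in_V] has_derivative_d2phi[OF p_in_V] has_derivative_phi[OF p_in_V] metric_differentiable_phi[OF p_in_V]]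
        has_derivative_christoffel1_form_comp[OF has_derivative_jac_mult[OF p_in_V] has_derivative_jac_mult[OF p_in_V] has_derivative_jac_mult[OF p_in_V] has_derivative_phi[OF p_in_V] christoffel1_differentiable_phi[OF p_in_V]])
  have "(\<Sum>c\<in>UNIV. x$c * dpartial c (\<lambda>y. christoffel1_form gM y w u z) p)
      = (\<Sum>c\<in>UNIV. x$c * dpartial c (\<lambda>y. gform GU (\<phi> y) (jac y *v w) (d2phi y u z) + christoffel1_form GU (\<phi> y) (jac y *v w) (jac y *v u) (jac y *v z)) p)"
    by (intro sum.cong refl arg_cong2[where f="(*)"] dpartial_cong_open[OF open_V p_in_V]) (simp add: christoffel1_form_pullback)
  also have "\<dots> = dchristoffel1_pullback x w u z" unfolding sum_dpartial_eq_derivative[OF hd] dchristoffel1_pullback_def by (simp add: algebra_simps)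
  finally show ?thesis .
qed

lemma d2phi_sym: "v \<in> V \<Longrightarrow> d2phi v u w = d2phi v w u"
proof -
  assume v: "v \<in> V"
  have "(\<Sum>a\<in>UNIV. \<Sum>b\<in>UNIV. u$a * w$b * ddphi a b i v) = (\<Sum>b\<in>UNIV. \<Sum>a\<in>UNIV. u$a * w$b * ddphi a b i v)" for i
    by (rule sum.swap)
  also have "\<dots> i = (\<Sum>b\<in>UNIV. \<Sum>a\<in>UNIV. w$b * u$a * ddphi b a i v)" for i by (simp add: ddphi_sym[OF v] mult_ac)
  finally show ?thesis by (simp add: d2phi_def vec_eq_iff)
qed

lemma dddphi_sym: "dpartial c (\<lambda>z. ddphi a b i z) p = dpartial a (\<lambda>z. ddphi c b i z) p"
  unfolding ddphi_def
  by (rule dpartial_commute[OF open_V p_in_V dphi_differentiable])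
     (use ddphi_differentiable[OF p_in_V, of a b i] ddphi_differentiable[OF p_in_V, of c b i] in \<open>simp_all add: ddphi_def[abs_def]\<close>)

lemma d3phi_sym: "d3phi p x u w = d3phi p u x w"
proof -
  have "(\<Sum>c\<in>UNIV. \<Sum>a\<in>UNIV. \<Sum>b\<in>UNIV. x$c * u$a * w$b * dpartial c (\<lambda>z. ddphi a b i z) p)
      = (\<Sum>a\<in>UNIV. \<Sum>c\<in>UNIV. \<Sum>b\<in>UNIV. x$c * u$a * w$b * dpartial c (\<lambda>z. ddphi a b i z) p)" for i
    by (rule sum.swap)
  also have "\<dots> i = (\<Sum>a\<in>UNIV. \<Sum>c\<in>UNIV. \<Sum>b\<in>UNIV. u$a * x$c * w$b * dpartial a (\<lambda>z. ddphi c b i z) p)" for i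
    by (simp add: dddphi_sym[of _ _ _ i] mult_ac)
  finally show ?thesis by (simp add: d3phi_def vec_eq_iff)
qed

lemma local_metric_x0: "local_metric GU U x0" using local_metric_at[OF x0_in_U] .

lemma gform_pullback: "gform gM p u w = gform GU (\<phi> p) (jac p *v u) (jac p *v w)"
proof -
  have "gform gM p u w = (\<Sum>a\<in>UNIV. u$a * (\<Sum>b\<in>UNIV. w$b * gform GU (\<phi> p) (dphi_col a p) (dphi_col b p)))"
    unfolding gform_def[of gM] by (simp add: pullback_metric_entry[OF p_in_V] sum_distrib_left mult_ac)
  also have "\<dots> = gform GU (\<phi> p) (jac p *v u) (jac p *v w)"
    unfolding jac_mult_vector unfolding gform_lin_left unfolding gform_lin_right ..
  finally show ?thesis .
qed

lemma gform_metric_hessian: "gform GU y u w = \<kappa> * gform (hessian f) y u w"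
  unfolding gform_def by (simp add: metric_entry hessian_def sum_distrib_left mult_ac)

lemma second_fundamental: "(\<Sum>j\<in>UNIV. dpartial j f x0 * d2phi p u w $ j) = - gform (hessian f) x0 (jac p *v u) (jac p *v w)"
proof -
  have sec: "(\<Sum>j\<in>UNIV. dpartial j f x0 * ddphi a b j p) = - gform (hessian f) x0 (dphi_col a p) (dphi_col b p)" for a b
  proof -
    have "gform (hessian f) x0 (dphi_col a p) (dphi_col b p) = (\<Sum>r\<in>UNIV. \<Sum>j\<in>UNIV. dphi a r p * iter_partial [r, j] f x0 * dphi b j p)"
      by (simp add: gform_def hessian_def dphi_col_def)
    also have "\<dots> = (\<Sum>j\<in>UNIV. \<Sum>r\<in>UNIV. dphi a r p * iter_partial [r, j] f x0 * dphi b j p)" by (rule sum.swap)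
    also have "\<dots> = (\<Sum>j\<in>UNIV. (\<Sum>r\<in>UNIV. iter_partial [r, j] f x0 * dphi a r p) * dphi b j p)"
      by (simp add: sum_distrib_right sum_distrib_left mult_ac)
    finally show ?thesis using second_derivative_level[OF p_in_V, of a b] by (simp add: sum.distrib)
  qed
  have "(\<Sum>j\<in>UNIV. dpartial j f x0 * d2phi p u w $ j) = (\<Sum>j\<in>UNIV. \<Sum>a\<in>UNIV. \<Sum>b\<in>UNIV. u$a * w$b * (dpartial j f x0 * ddphi a b j p))"
    by (simp add: d2phi_def sum_distrib_left mult_ac)
  also have "\<dots> = (\<Sum>a\<in>UNIV. \<Sum>b\<in>UNIV. \<Sum>j\<in>UNIV. u$a * w$b * (dpartial j f x0 * ddphi a b j p))" by (rule sum_rotate3[symmetric])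
  also have "\<dots> = (\<Sum>a\<in>UNIV. u$a * (\<Sum>b\<in>UNIV. w$b * (- gform (hessian f) x0 (dphi_col a p) (dphi_col b p))))"
    by (simp add: sum_distrib_left[symmetric] sec mult.assoc) (simp add: sum_distrib_left sum_negf)
  also have "\<dots> = - gform (hessian f) x0 (jac p *v u) (jac p *v w)"
    unfolding jac_mult_vector unfolding gform_lin_left unfolding gform_lin_right by (simp add: sum_negf)
  finally show ?thesis .
qed

text \<open>
  \<open>ambient_cov u w\<close> is the covector \<open>g(\<nabla>\<^sub>X Y, -)\<close> at \<open>x0\<close> for the tangent fields
  \<open>X = D\<phi> u\<close>, \<open>Y = D\<phi> w\<close>: its tangential part is the Christoffel covector of \<open>M\<close>
  (\<open>christoffel1_vec_pullback\<close>) and its normal part the second fundamental form.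
\<close>

definition ambient_cov :: "real^'m \<Rightarrow> real^'m \<Rightarrow> real^'n" where
  "ambient_cov u w = GU x0 *v d2phi p u w + christoffel1_vec GU x0 (jac p *v u) (jac p *v w)"

lemma ambient_cov_normal: "inner (ambient_cov u w) x0 = - (d / 2) * gform GU x0 (jac p *v u) (jac p *v w)"
proof -
  have a: "inner (GU x0 *v d2phi p u w) x0 = - (1 / d) * (\<Sum>j\<in>UNIV. dpartial j f x0 * d2phi p u w $ j)"
  proof -
    have "inner (GU x0 *v d2phi p u w) x0 = (\<Sum>j\<in>UNIV. d2phi p u w $ j * (\<Sum>i\<in>UNIV. x0$i * GU x0 $ i $ j))"
      unfolding inner_vec_def matrix_vector_mult_def
      by (simp add: sum_distrib_left sum_distrib_right mult_ac) (rule sum.swap)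
    also have "\<dots> = - (1 / d) * (\<Sum>j\<in>UNIV. dpartial j f x0 * d2phi p u w $ j)"
      by (simp add: position_metric_row[OF x0_in_U] sum_distrib_left mult_ac)
    finally show ?thesis .
  qed
  have c: "inner (christoffel1_vec GU x0 (jac p *v u) (jac p *v w)) x0 = (d - 2) / 2 * gform GU x0 (jac p *v u) (jac p *v w)"
    using christoffel1_form_inner[of GU x0 x0 "jac p *v u" "jac p *v w"] christoffel1_form_position[OF x0_in_U] by (simp add: inner_commute)
  have "inner (ambient_cov u w) x0 = (1 / d) * gform (hessian f) x0 (jac p *v u) (jac p *v w)
       + (d - 2) / 2 * gform GU x0 (jac p *v u) (jac p *v w)"
    unfolding ambient_cov_def inner_add_left a c second_fundamental by simp
  also have "\<dots> = - (d / 2) * gform GU x0 (jac p *v u) (jac p *v w)"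
    unfolding gform_metric_hessian using d_gt_1 by (simp add: \<kappa>_def field_simps)
  finally show ?thesis .
qed

lemma inverse_form_pullback: "inverse_form gM p (christoffel1_vec gM p u w) (christoffel1_vec gM p u' w')
  = gform GU x0 (d2phi p u w) (d2phi p u' w') + christoffel1_form GU x0 (d2phi p u w) (jac p *v u') (jac p *v w')
    + christoffel1_form GU x0 (d2phi p u' w') (jac p *v u) (jac p *v w)
    + inverse_form GU x0 (christoffel1_vec GU x0 (jac p *v u) (jac p *v w)) (christoffel1_vec GU x0 (jac p *v u') (jac p *v w'))
    + inner (ambient_cov u w) x0 * inner (ambient_cov u' w') x0"
proof -
  have "inverse_form gM p (christoffel1_vec gM p u w) (christoffel1_vec gM p u' w') = inner (ambient_cov u w) (matrix_inv (GU x0) *v ambient_cov u' w') + inner (ambient_cov u w) x0 * inner (ambient_cov u' w') x0"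
    unfolding inverse_form_inner christoffel1_vec_pullback[OF p_in_V] ambient_cov_def[symmetric] using inner_matrix_inv_metric_split[OF p_in_V, of "ambient_cov u w" "ambient_cov u' w'"] by simp
  also have "inner (ambient_cov u w) (matrix_inv (GU x0) *v ambient_cov u' w')
     = gform GU x0 (d2phi p u w) (d2phi p u' w') + christoffel1_form GU x0 (d2phi p u w) (jac p *v u') (jac p *v w')
       + christoffel1_form GU x0 (d2phi p u' w') (jac p *v u) (jac p *v w)
       + inverse_form GU x0 (christoffel1_vec GU x0 (jac p *v u) (jac p *v w)) (christoffel1_vec GU x0 (jac p *v u') (jac p *v w'))"
    unfolding ambient_cov_def local_metric.inverse_form_metric_translate[OF local_metric_x0] christoffel1_form_inner ..
  finally show ?thesis .
qed

lemma gauss_equation_numerator: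
  fixes a b :: "real^'m"
  defines "X \<equiv> jac p *v a" and "Y \<equiv> jac p *v b"
  shows "gform gM p (curv_vec gM p a b b) a = gform GU x0 (curv_vec GU x0 X Y Y) X
     - d\<^sup>2 / 4 * (gform GU x0 X X * gform GU x0 Y Y - (gform GU x0 X Y)\<^sup>2)"
proof -
  note RM = local_metric.curvature_form_christoffel1[OF local_metric_pullback, of a b]
  note RU = local_metric.curvature_form_christoffel1[OF local_metric_x0, of X Y]
  note DGC = local_metric.dgform_christoffel1_form[OF local_metric_x0]
  have gs: "gform GU x0 Y X = gform GU x0 X Y" by (rule gform_sym[where G=GU and y=x0]) (rule metric_sym[OF x0_in_U])
  have ba: "d2phi p b a = d2phi p a b" by (rule d2phi_sym[OF p_in_V])
  have p3: "d3phi p b a b = d3phi p a b b" by (rule d3phi_sym)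
  \<comment> \<open>all terms with third derivatives of \<open>\<phi>\<close> or derivatives of \<open>\<Gamma>\<close> cancel in pairs\<close>
  show ?thesis
    unfolding RM RU dchristoffel1_pullback inverse_form_pullback dchristoffel1_pullback_def DGC ambient_cov_normal ba p3 X_def[symmetric] Y_def[symmetric] gs
    by (simp add: algebra_simps power2_eq_square)
qed

lemma gauss_equation:
  assumes nd: "nondeg_plane GU x0 (jac p *v a) (jac p *v b)"
  shows "sectional_curvature gM p a b = sectional_curvature GU x0 (jac p *v a) (jac p *v b) - d\<^sup>2 / 4"
proof -
  define X where "X = jac p *v a"
  define Y where "Y = jac p *v b"
  define den where "den = gform GU x0 X X * gform GU x0 Y Y - (gform GU x0 X Y)\<^sup>2"
  have den: "den \<noteq> 0" using nd unfolding nondeg_plane_def den_def X_def Y_def .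
  have "sectional_curvature gM p a b = (gform GU x0 (curv_vec GU x0 X Y Y) X - d\<^sup>2 / 4 * den) / den"
    unfolding sectional_curvature_def unfolding gauss_equation_numerator unfolding gform_pullback X_def Y_def den_def ..
  also have "\<dots> = gform GU x0 (curv_vec GU x0 X Y Y) X / den - d\<^sup>2 / 4"
    using den by (simp add: field_simps)
  also have "\<dots> = sectional_curvature GU x0 X Y - d\<^sup>2 / 4"
    unfolding sectional_curvature_def den_def ..
  finally show ?thesis unfolding X_def Y_def .
qed

lemma sectional_curvature_dilated:
  assumes nd: "nondeg_plane GU x0 (frechet_derivative \<phi> (at p) a) (frechet_derivative \<phi> (at p) b)"
    and c: "c > 0"
  shows "sectional_curvature GU (c *\<^sub>R x0) (c *\<^sub>R frechet_derivative \<phi> (at p) a) (c *\<^sub>R frechet_derivative \<phi> (at p) b)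
       = (1 / c powr d) * (sectional_curvature gM p a b + d\<^sup>2 / 4)"
  using nd unfolding frechet_derivative_phi[OF p_in_V] sectional_curvature_scaleR[OF x0_in_U c] by (simp add: gauss_equation)

end

theorem corollary2p2:
  fixes U :: "(real^'n) set" and f :: "real^'n \<Rightarrow> real" and d c :: real
    and V :: "(real^'m) set" and \<phi> :: "real^'m \<Rightarrow> real^'n" and p a b :: "real^'m"
  assumes "CARD('n) \<ge> 3" and "CARD('n) = CARD('m) + 1"
    and "open_cone U"
    and "smooth_on U f"
    and "d > 1"
    and "\<forall>x\<in>U. \<forall>t::real. t > 0 \<longrightarrow> f (t *\<^sub>R x) = t powr d * f x"
    and "\<forall>x\<in>U. f x > 0"
    and "\<forall>x\<in>U. det (hessian f x) \<noteq> 0"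
    and "local_param (level_set U f) V \<phi>"
    and "p \<in> V"
    and "nondeg_plane (hess_metric d f) (\<phi> p)
           (frechet_derivative \<phi> (at p) a) (frechet_derivative \<phi> (at p) b)"
    and "c > 0"
  shows "sectional_curvature (hess_metric d f) (c *\<^sub>R \<phi> p)
           (c *\<^sub>R frechet_derivative \<phi> (at p) a) (c *\<^sub>R frechet_derivative \<phi> (at p) b)
         = (1 / c powr d) * (sectional_curvature (pullback_metric (hess_metric d f) \<phi>) p a b + d\<^sup>2 / 4)"
proof -
  interpret H: level_hypersurface U f d V \<phi> p
    by unfold_locales (use assms in auto)
  show ?thesis by (rule H.sectional_curvature_dilated) (use assms in auto)
qed

end
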